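(* Let $m\ge1$ and $0\le k\le m$. In $G_{m,k}$ put $A_i=a_{i+1}^{-1}a_i$ for $1\le i\le m$ and $B_j=a_{m+j+1}^{-1}a_j$ for $1\le j\le k$. Then the elements $A_1,\dots,A_m,B_1,\dots,B_k$ freely generate a free normal subgroup $F_{m+k}$ (the kernel of the homomorphism $G_{m,k}\to\mathbb Z$ sending every $a_i$ to $1$), and $G_{m,k}\cong F_{m+k}\rtimes_{\phi_{m,k}}\mathbb Z$ with $\mathbb Z=\langle a_1\rangle$, where the monodromy automorphism $\phi_{m,k}(x)=a_1xa_1^{-1}$ is given by $\phi_{m,k}(A_i)=A_1A_2\cdots A_{i-1}\,A_i\,A_{i-1}^{-1}\cdots A_1^{-1}$ for $1\le i\le m$ (so $\phi_{m,k}(A_1)=A_1$), and $\phi_{m,k}(B_j)=A_1A_2\cdots A_m\,(B_1B_2\cdots B_j)\,A_{j-1}^{-1}A_{j-2}^{-1}\cdots A_1^{-1}$ for $1\le j\le k$ (so $\phi_{m,k}(B_1)=A_1\cdots A_mB_1$). Furthermore, $\phi_{m,k}$ is the restriction of $\phi_{m,m}$ to $F_{m+k}$.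
   Context: $G_{m,k}=\langle a_1,\dots,a_{m+k+1}\mid [a_i,a_{i+1}]=1\ (1\le i\le m),\ a_{m+j+1}^{-1}a_ja_{m+j+1}=a_{m+j}\ (1\le j\le k)\rangle$. *)

theory Defs
  imports "HOL-Algebra.Algebra"
begin

text \<open>A letter (x, False) stands for the generator x, (x, True) for its inverse.\<close>
type_synonym 'a word = "('a \<times> bool) list"

fun reduced :: "'a word \<Rightarrow> bool" where
  "reduced [] = True"
| "reduced [_] = True"
| "reduced ((x,b) # (y,c) # w) = (\<not> (x = y \<and> b \<noteq> c) \<and> reduced ((y,c) # w))"

fun cons_red :: "('a \<times> bool) \<Rightarrow> 'a word \<Rightarrow> 'a word" where
  "cons_red l [] = [l]"
| "cons_red (x,b) ((y,c) # w) = (if x = y \<and> b \<noteq> c then w else (x,b) # (y,c) # w)"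

definition normalize :: "'a word \<Rightarrow> 'a word" where
  "normalize w = foldr cons_red w []"

definition FreeGroup :: "'a set \<Rightarrow> 'a word monoid" where
  "FreeGroup S = \<lparr> carrier = {w. fst ` set w \<subseteq> S \<and> reduced w},
                  monoid.mult = (\<lambda>u v. normalize (u @ v)),
                  one = [] \<rparr>"

definition gen :: "'a \<Rightarrow> 'a word" where
  "gen x = [(x, False)]"

definition eval_word :: "('b, 'c) monoid_scheme \<Rightarrow> ('a \<Rightarrow> 'b) \<Rightarrow> 'a word \<Rightarrow> 'b" where
  "eval_word G f w = foldr (\<lambda>(x,b) acc. (if b then inv\<^bsub>G\<^esub> (f x) else f x) \<otimes>\<^bsub>G\<^esub> acc) w \<one>\<^bsub>G\<^esub>"

definition gprod :: "('b, 'c) monoid_scheme \<Rightarrow> 'b list \<Rightarrow> 'b" where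
  "gprod G xs = foldr (\<lambda>x acc. x \<otimes>\<^bsub>G\<^esub> acc) xs \<one>\<^bsub>G\<^esub>"

definition normal_closure :: "('b, 'c) monoid_scheme \<Rightarrow> 'b set \<Rightarrow> 'b set" where
  "normal_closure G R = \<Inter> {N. N \<lhd> G \<and> R \<subseteq> N}"

definition relators :: "nat \<Rightarrow> nat \<Rightarrow> nat word set" where
  "relators m k =
     {normalize [(i,True),(i+1,True),(i,False),(i+1,False)] | i. 1 \<le> i \<and> i \<le> m}
   \<union> {normalize [(m+j+1,True),(j,False),(m+j+1,False),(m+j,True)] | j. 1 \<le> j \<and> j \<le> k}"

definition Gmk :: "nat \<Rightarrow> nat \<Rightarrow> nat word set monoid" where
  "Gmk m k = FreeGroup {1..m+k+1} Mod normal_closure (FreeGroup {1..m+k+1}) (relators m k)"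

definition agen :: "nat \<Rightarrow> nat \<Rightarrow> nat \<Rightarrow> nat word set" where
  "agen m k i = normal_closure (FreeGroup {1..m+k+1}) (relators m k) #>\<^bsub>FreeGroup {1..m+k+1}\<^esub> gen i"

definition Aelt :: "nat \<Rightarrow> nat \<Rightarrow> nat \<Rightarrow> nat word set" where
  "Aelt m k i = inv\<^bsub>Gmk m k\<^esub> (agen m k (i+1)) \<otimes>\<^bsub>Gmk m k\<^esub> agen m k i"

definition Belt :: "nat \<Rightarrow> nat \<Rightarrow> nat \<Rightarrow> nat word set" where
  "Belt m k j = inv\<^bsub>Gmk m k\<^esub> (agen m k (m+j+1)) \<otimes>\<^bsub>Gmk m k\<^esub> agen m k j"

definition theta :: "nat \<Rightarrow> nat \<Rightarrow> nat word \<Rightarrow> nat word set" where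
  "theta m k = eval_word (Gmk m k) (\<lambda>n. if n \<le> m then Aelt m k n else Belt m k (n - m))"

definition Fsub :: "nat \<Rightarrow> nat \<Rightarrow> nat word set set" where
  "Fsub m k = generate (Gmk m k) (Aelt m k ` {1..m} \<union> Belt m k ` {1..k})"

definition Pprod :: "nat \<Rightarrow> nat \<Rightarrow> nat \<Rightarrow> nat word set" where
  "Pprod m k i = gprod (Gmk m k) (map (Aelt m k) [1..<i+1])"

definition Qprod :: "nat \<Rightarrow> nat \<Rightarrow> nat \<Rightarrow> nat word set" where
  "Qprod m k j = gprod (Gmk m k) (map (Belt m k) [1..<j+1])"

end

theory Submission
  imports Defs
begin

(* Telescoping the relations, every a_1 a_u^-1 is a product of the A_i and B_j. Hence
   conjugation by a_1 preserves F = <A_i, B_j>, F is normal and G = F <a_1>. The map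
   a_i |-> 1 onto Z kills F and is injective on <a_1>, so its kernel is F and
   F \<inter> <a_1> = 1; the same telescoping gives the monodromy formulas.
   Freeness: on the free group E with basis x_1, ..., x_(m+k) let phi be the claimed
   monodromy, x_n |-> R_n R_(s n)^-1 with R_n = x_1 ... x_n and s n = n - 1 for n <= m,
   s n = n - m - 1 otherwise. The permutations
   z |-> R_(u-1)^-1 phi(z) of E satisfy the relations of G, and composed with
   theta : E -> G they give the left regular action of E, which is faithful; hence theta
   is injective. *)

section \<open>Free groups\<close>

lemma reduced_ConsD: "reduced (l # w) \<Longrightarrow> reduced w"
  by (cases w; cases l) auto

lemma reduced_cons_red: "reduced w \<Longrightarrow> reduced (cons_red l w)"
  by (cases w; cases l) (auto dest: reduced_ConsD)

lemma reduced_normalize: "reduced (normalize w)"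
  unfolding normalize_def by (induction w) (auto intro: reduced_cons_red)

lemma normalize_Nil [simp]: "normalize [] = []"
  by (simp add: normalize_def)

lemma normalize_Cons: "normalize (l # w) = cons_red l (normalize w)"
  by (simp add: normalize_def)

lemma normalize_append: "normalize (u @ v) = foldr cons_red u (normalize v)"
  by (simp add: normalize_def)

lemma letters_cons_red: "fst ` set (cons_red l w) \<subseteq> insert (fst l) (fst ` set w)"
  by (cases w; cases l) (auto split: if_splits)

lemma letters_normalize: "fst ` set (normalize w) \<subseteq> fst ` set w"
proof (induction w)
  case (Cons l w)
  have "fst ` set (normalize (l # w)) \<subseteq> insert (fst l) (fst ` set (normalize w))"
    using letters_cons_red[of l "normalize w"] by (simp add: normalize_Cons)
  also have "\<dots> \<subseteq> fst ` set (l # w)" using Cons by auto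
  finally show ?case .
qed simp

lemma normalize_reduced: "reduced w \<Longrightarrow> normalize w = w"
proof (induction w)
  case (Cons l w)
  then have "normalize w = w" using reduced_ConsD by blast
  with Cons.prems show ?case
    by (cases w; cases l) (auto simp: normalize_Cons)
qed simp

lemma cons_red_cancel:
  assumes "reduced w" and "b \<noteq> c"
  shows "cons_red (x, b) (cons_red (x, c) w) = w"
proof (cases w)
  case (Cons l w')
  obtain y d where "l = (y, d)" by (cases l)
  with assms Cons show ?thesis by (cases w'; auto)
qed (use assms in simp)

lemma reduced_foldr_cons_red: "reduced y \<Longrightarrow> reduced (foldr cons_red z y)"
  by (induction z) (auto intro: reduced_cons_red)

lemma foldr_cons_red:
  assumes "reduced y"
  shows "foldr cons_red (cons_red l z) y = cons_red l (foldr cons_red z y)"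
proof (cases z)
  case (Cons l' z')
  obtain x b y' c where "l = (x, b)" "l' = (y', c)" by (cases l; cases l')
  with Cons show ?thesis
    using cons_red_cancel[OF reduced_foldr_cons_red[OF assms, of z']] by auto
qed simp

lemma foldr_cons_red_normalize:
  "reduced y \<Longrightarrow> foldr cons_red (normalize u) y = foldr cons_red u y"
  by (induction u) (simp_all add: normalize_Cons foldr_cons_red)

lemma normalize_normalize_append: "normalize (normalize u @ v) = normalize (u @ v)"
  by (simp add: normalize_append foldr_cons_red_normalize reduced_normalize)

lemma normalize_append_normalize: "normalize (u @ normalize v) = normalize (u @ v)"
  by (simp add: normalize_append normalize_reduced reduced_normalize)

definition word_inv :: "'a word \<Rightarrow> 'a word" where
  "word_inv w = rev (map (\<lambda>(x, b). (x, \<not> b)) w)"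

lemma letters_word_inv: "fst ` set (word_inv w) = fst ` set w"
  by (force simp: word_inv_def)

lemma normalize_append_cancel: "normalize (u @ [(x, \<not> b), (x, b)] @ v) = normalize (u @ v)"
  using cons_red_cancel[OF reduced_normalize[of v], of "\<not> b" b x]
  by (simp add: normalize_append normalize_Cons)

lemma normalize_word_inv_append: "normalize (word_inv w @ w) = []"
proof (induction w)
  case (Cons l w)
  obtain x b where "l = (x, b)" by (cases l)
  then have "word_inv (l # w) @ l # w = word_inv w @ [(x, \<not> b), (x, b)] @ w"
    by (simp add: word_inv_def)
  with Cons show ?case by (metis normalize_append_cancel)
qed (simp add: word_inv_def)

lemma carrier_FreeGroup: "carrier (FreeGroup S) = {w. fst ` set w \<subseteq> S \<and> reduced w}"
  by (simp add: FreeGroup_def)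

lemma mult_FreeGroup: "u \<otimes>\<^bsub>FreeGroup S\<^esub> v = normalize (u @ v)"
  by (simp add: FreeGroup_def)

lemma one_FreeGroup: "\<one>\<^bsub>FreeGroup S\<^esub> = []"
  by (simp add: FreeGroup_def)

lemma group_FreeGroup: "group (FreeGroup S)"
proof (rule groupI)
  fix x y assume xy: "x \<in> carrier (FreeGroup S)" "y \<in> carrier (FreeGroup S)"
  have "fst ` set (normalize (x @ y)) \<subseteq> fst ` set (x @ y)" by (rule letters_normalize)
  also have "\<dots> \<subseteq> S" using xy by (auto simp: carrier_FreeGroup)
  finally show "x \<otimes>\<^bsub>FreeGroup S\<^esub> y \<in> carrier (FreeGroup S)"
    by (simp add: carrier_FreeGroup mult_FreeGroup reduced_normalize)
next
  fix x assume x: "x \<in> carrier (FreeGroup S)"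
  show "\<exists>y\<in>carrier (FreeGroup S). y \<otimes>\<^bsub>FreeGroup S\<^esub> x = \<one>\<^bsub>FreeGroup S\<^esub>"
  proof
    show "normalize (word_inv x) \<otimes>\<^bsub>FreeGroup S\<^esub> x = \<one>\<^bsub>FreeGroup S\<^esub>"
      by (simp add: mult_FreeGroup one_FreeGroup normalize_normalize_append normalize_word_inv_append)
    show "normalize (word_inv x) \<in> carrier (FreeGroup S)"
      using x letters_normalize[of "word_inv x"] letters_word_inv[of x]
      by (auto simp: carrier_FreeGroup reduced_normalize)
  qed
qed (auto simp: carrier_FreeGroup mult_FreeGroup one_FreeGroup normalize_reduced
       normalize_normalize_append normalize_append_normalize)

lemma gen_in_carrier: "x \<in> S \<Longrightarrow> gen x \<in> carrier (FreeGroup S)"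
  by (simp add: gen_def carrier_FreeGroup)

lemma inv_gen_FreeGroup:
  assumes "x \<in> S"
  shows "inv\<^bsub>FreeGroup S\<^esub> (gen x) = [(x, True)]"
proof -
  interpret group "FreeGroup S" by (rule group_FreeGroup)
  have "[(x, True)] \<otimes>\<^bsub>FreeGroup S\<^esub> gen x = \<one>\<^bsub>FreeGroup S\<^esub>"
    by (simp add: mult_FreeGroup one_FreeGroup gen_def normalize_Cons)
  moreover have "[(x, True)] \<in> carrier (FreeGroup S)"
    using assms by (simp add: carrier_FreeGroup)
  ultimately show ?thesis using inv_equality gen_in_carrier[OF assms] by blast
qed

lemma FreeGroup_Cons:
  assumes "l # w \<in> carrier (FreeGroup S)"
  shows "l # w
    = (if snd l then inv\<^bsub>FreeGroup S\<^esub> (gen (fst l)) else gen (fst l)) \<otimes>\<^bsub>FreeGroup S\<^esub> w"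
proof -
  have "fst l \<in> S" using assms by (auto simp: carrier_FreeGroup)
  then show ?thesis
    using assms normalize_reduced[of "l # w"] inv_gen_FreeGroup[of "fst l" S]
    by (cases l) (auto simp: mult_FreeGroup gen_def carrier_FreeGroup)
qed

lemma FreeGroup_ConsD: "l # w \<in> carrier (FreeGroup S) \<Longrightarrow> w \<in> carrier (FreeGroup S)"
  by (auto simp: carrier_FreeGroup dest: reduced_ConsD)

lemma hom_inv_group:
  assumes "h \<in> hom G H" "group G" "group H" "x \<in> carrier G"
  shows "h (inv\<^bsub>G\<^esub> x) = inv\<^bsub>H\<^esub> (h x)"
  using assms group_hom.hom_inv[of G H h x] by (simp add: group_hom_def group_hom_axioms_def)

lemma FreeGroup_hom_ext:
  assumes H: "group H" and h: "h \<in> hom (FreeGroup S) H" and h': "h' \<in> hom (FreeGroup S) H"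
    and gens: "\<And>x. x \<in> S \<Longrightarrow> h (gen x) = h' (gen x)"
    and w: "w \<in> carrier (FreeGroup S)"
  shows "h w = h' w"
  using w
proof (induction w)
  case Nil
  then show ?case
    using hom_one[OF h group_FreeGroup H] hom_one[OF h' group_FreeGroup H]
    by (simp add: one_FreeGroup)
next
  case (Cons l w)
  interpret F: group "FreeGroup S" by (rule group_FreeGroup)
  have w: "w \<in> carrier (FreeGroup S)" using FreeGroup_ConsD[OF Cons.prems] .
  have x: "fst l \<in> S" using Cons.prems by (auto simp: carrier_FreeGroup)
  define g where "g = (if snd l then inv\<^bsub>FreeGroup S\<^esub> (gen (fst l)) else gen (fst l))"
  have g: "g \<in> carrier (FreeGroup S)" unfolding g_def using gen_in_carrier[OF x] by simp
  have "h g = h' g"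
    unfolding g_def using gens[OF x] gen_in_carrier[OF x]
      hom_inv_group[OF h group_FreeGroup H] hom_inv_group[OF h' group_FreeGroup H] by simp
  moreover have "l # w = g \<otimes>\<^bsub>FreeGroup S\<^esub> w"
    unfolding g_def by (rule FreeGroup_Cons[OF Cons.prems])
  ultimately show ?case
    using Cons.IH[OF w] hom_mult[OF h g w] hom_mult[OF h' g w] by simp
qed

lemma eval_word_Nil [simp]: "eval_word H f [] = \<one>\<^bsub>H\<^esub>"
  by (simp add: eval_word_def)

lemma eval_word_Cons [simp]:
  "eval_word H f ((x, b) # w) = (if b then inv\<^bsub>H\<^esub> (f x) else f x) \<otimes>\<^bsub>H\<^esub> eval_word H f w"
  by (simp add: eval_word_def)

lemma eval_word_closed_set:
  fixes H (structure)
  assumes "\<one> \<in> M" and "\<forall>y\<in>M. \<forall>z\<in>M. y \<otimes> z \<in> M"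
    and "\<forall>x\<in>S. f x \<in> M \<and> inv (f x) \<in> M" and "fst ` set w \<subseteq> S"
  shows "eval_word H f w \<in> M"
  using assms(4) by (induction w) (use assms(1-3) in auto)

lemma eval_word_closed:
  assumes "group H" and "\<forall>x\<in>S. f x \<in> carrier H" and "fst ` set w \<subseteq> S"
  shows "eval_word H f w \<in> carrier H"
  using assms by (intro eval_word_closed_set) (auto intro: group.inv_closed monoid.m_closed group.is_monoid)

lemma eval_word_cons_red:
  assumes H: "group H" and f: "\<forall>x\<in>S. f x \<in> carrier H"
    and w: "fst ` set w \<subseteq> S" and l: "fst l \<in> S"
  shows "eval_word H f (cons_red l w) = eval_word H f (l # w)"
proof (cases w)
  case (Cons l' w')
  interpret group H by (rule H)
  obtain x b y c where xy: "l = (x, b)" "l' = (y, c)" by (cases l; cases l')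
  have "eval_word H f w' \<in> carrier H" "f x \<in> carrier H"
    using eval_word_closed[OF H f] f w l Cons xy by auto
  then show ?thesis using Cons xy by (cases b) (auto simp: m_assoc[symmetric])
qed (cases l; simp)

lemma eval_word_normalize:
  assumes H: "group H" and f: "\<forall>x\<in>S. f x \<in> carrier H" and w: "fst ` set w \<subseteq> S"
  shows "eval_word H f (normalize w) = eval_word H f w"
  using w
proof (induction w)
  case (Cons l w)
  have "fst ` set (normalize w) \<subseteq> S" using letters_normalize[of w] Cons.prems by auto
  with Cons show ?case
    by (cases l) (simp add: normalize_Cons eval_word_cons_red[OF H f])
qed simp

lemma eval_word_append:
  assumes H: "group H" and f: "\<forall>x\<in>S. f x \<in> carrier H"
    and u: "fst ` set u \<subseteq> S" and v: "fst ` set v \<subseteq> S"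
  shows "eval_word H f (u @ v) = eval_word H f u \<otimes>\<^bsub>H\<^esub> eval_word H f v"
  using u
proof (induction u)
  case Nil then show ?case using eval_word_closed[OF H f v] H by (simp add: group.is_monoid)
next
  case (Cons l u)
  interpret group H by (rule H)
  show ?case
    using Cons eval_word_closed[OF H f v] eval_word_closed[OF H f, of u] f
    by (cases l) (auto simp: m_assoc)
qed

lemma eval_word_hom:
  assumes H: "group H" and f: "\<forall>x\<in>S. f x \<in> carrier H"
  shows "eval_word H f \<in> hom (FreeGroup S) H"
proof (rule homI)
  fix u v assume "u \<in> carrier (FreeGroup S)" "v \<in> carrier (FreeGroup S)"
  then have u: "fst ` set u \<subseteq> S" and v: "fst ` set v \<subseteq> S" by (auto simp: carrier_FreeGroup)
  then have "eval_word H f (normalize (u @ v)) = eval_word H f (u @ v)"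
    by (intro eval_word_normalize[OF H f]) auto
  then show "eval_word H f (u \<otimes>\<^bsub>FreeGroup S\<^esub> v) = eval_word H f u \<otimes>\<^bsub>H\<^esub> eval_word H f v"
    by (simp add: mult_FreeGroup eval_word_append[OF H f u v])
qed (use eval_word_closed[OF H f] in \<open>auto simp: carrier_FreeGroup\<close>)

lemma eval_word_gen: "group H \<Longrightarrow> f x \<in> carrier H \<Longrightarrow> eval_word H f (gen x) = f x"
  by (simp add: gen_def group.is_monoid)

section \<open>Presentations\<close>

lemma normal_closure_normal:
  assumes G: "group G" and R: "R \<subseteq> carrier G"
  shows "normal_closure G R \<lhd> G"
proof -
  interpret group G by (rule G)
  let ?A = "{N. N \<lhd> G \<and> R \<subseteq> N}"
  have "carrier G \<in> ?A" using R normal_inv_iff subgroup_self by auto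
  then have "subgroup (\<Inter>?A) G"
    by (intro subgroups_Inter) (auto intro: normal_imp_subgroup)
  moreover have "x \<otimes>\<^bsub>G\<^esub> h \<otimes>\<^bsub>G\<^esub> inv\<^bsub>G\<^esub> x \<in> \<Inter>?A" if "x \<in> carrier G" "h \<in> \<Inter>?A" for x h
    using that normal_inv_iff by blast
  ultimately show ?thesis unfolding normal_closure_def normal_inv_iff by blast
qed

lemma normal_closure_subset: "R \<subseteq> carrier G \<Longrightarrow> group G \<Longrightarrow> R \<subseteq> normal_closure G R"
  unfolding normal_closure_def by blast

lemma normal_closure_minimal: "N \<lhd> G \<Longrightarrow> R \<subseteq> N \<Longrightarrow> normal_closure G R \<subseteq> N"
  unfolding normal_closure_def by blast

lemma hom_rcoset_const:
  assumes G: "group G" and H: "group H" and N: "N \<lhd> G" and h: "h \<in> hom G H"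
    and Nk: "N \<subseteq> kernel G H h" and x: "x \<in> carrier G" and y: "y \<in> N #>\<^bsub>G\<^esub> x"
  shows "h y = h x"
proof -
  obtain n where n: "n \<in> N" "y = n \<otimes>\<^bsub>G\<^esub> x" using y unfolding r_coset_def by blast
  have "n \<in> carrier G" using subgroup.mem_carrier[OF normal_imp_subgroup[OF N] n(1)] .
  moreover have "h n = \<one>\<^bsub>H\<^esub>" using Nk n by (auto simp: kernel_def)
  ultimately show ?thesis using n hom_mult[OF h _ x] h x H by (simp add: hom_in_carrier group.is_monoid)
qed

lemma FactGroup_induced_hom:
  fixes G (structure)
  assumes G: "group G" and H: "group H" and N: "N \<lhd> G" and h: "h \<in> hom G H"
    and Nk: "N \<subseteq> kernel G H h"
  shows "\<exists>h'\<in>hom (G Mod N) H. \<forall>x\<in>carrier G. h' (N #> x) = h x"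
proof -
  interpret group G by (rule G)
  interpret normal N G by (rule N)
  define h' where "h' C = h (SOME y. y \<in> C)" for C
  have h'x: "h' (N #> x) = h x" if x: "x \<in> carrier G" for x
  proof -
    have "(SOME y. y \<in> N #> x) \<in> N #> x" using rcos_self[OF x is_subgroup] by (rule someI)
    then show ?thesis unfolding h'_def using hom_rcoset_const[OF G H N h Nk x] by blast
  qed
  have "h' \<in> hom (G Mod N) H"
  proof (rule homI)
    fix C assume "C \<in> carrier (G Mod N)"
    then obtain x where "x \<in> carrier G" "C = N #> x" by (auto simp: carrier_FactGroup)
    then show "h' C \<in> carrier H" using h'x h by (simp add: hom_in_carrier)
  next
    fix C D assume "C \<in> carrier (G Mod N)" "D \<in> carrier (G Mod N)"
    then obtain x y where "x \<in> carrier G" "C = N #> x" "y \<in> carrier G" "D = N #> y"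
      by (auto simp: carrier_FactGroup)
    then show "h' (C \<otimes>\<^bsub>G Mod N\<^esub> D) = h' C \<otimes>\<^bsub>H\<^esub> h' D"
      using h'x hom_mult[OF h] rcos_sum by simp
  qed
  then show ?thesis using h'x by blast
qed

lemma (in group) commutator_eq_one_iff:
  "a \<in> carrier G \<Longrightarrow> b \<in> carrier G \<Longrightarrow>
   inv a \<otimes> (inv b \<otimes> (a \<otimes> (b \<otimes> \<one>))) = \<one> \<longleftrightarrow> a \<otimes> b = b \<otimes> a"
  by (smt (verit, ccfv_SIG) inv_solve_left l_inv_ex local.inv_equality m_closed)

lemma (in group) conjugator_eq_one_iff:
  "a \<in> carrier G \<Longrightarrow> c \<in> carrier G \<Longrightarrow> d \<in> carrier G \<Longrightarrow>
   inv c \<otimes> (a \<otimes> (c \<otimes> (inv d \<otimes> \<one>))) = \<one> \<longleftrightarrow> a \<otimes> c = c \<otimes> d"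
  by (smt (verit, best) inv_solve_right inv_unique l_inv_ex local.inv_equality m_assoc m_closed r_inv_ex)

section \<open>The groups \<open>G\<^sub>m\<^sub>,\<^sub>k\<close>\<close>

definition relator_closure :: "nat \<Rightarrow> nat \<Rightarrow> nat word set" where
  "relator_closure m k = normal_closure (FreeGroup {1..m+k+1}) (relators m k)"

lemma relators_carrier: "relators m k \<subseteq> carrier (FreeGroup {1..m+k+1})"
proof
  fix r assume "r \<in> relators m k"
  then obtain u where "r = normalize u" "fst ` set u \<subseteq> {1..m+k+1}"
    unfolding relators_def by auto
  then show "r \<in> carrier (FreeGroup {1..m+k+1})"
    using letters_normalize[of u] by (auto simp: carrier_FreeGroup reduced_normalize)
qed

lemma relator_closure_normal: "relator_closure m k \<lhd> FreeGroup {1..m+k+1}"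
  unfolding relator_closure_def by (rule normal_closure_normal[OF group_FreeGroup relators_carrier])

lemma Gmk_eq: "Gmk m k = FreeGroup {1..m+k+1} Mod relator_closure m k"
  by (simp add: Gmk_def relator_closure_def)

lemma agen_eq: "agen m k i = relator_closure m k #>\<^bsub>FreeGroup {1..m+k+1}\<^esub> gen i"
  by (simp add: agen_def relator_closure_def)

lemma group_Gmk: "group (Gmk m k)"
  unfolding Gmk_eq using relator_closure_normal by (rule normal.factorgroup_is_group)

lemma agen_carrier: "i \<in> {1..m+k+1} \<Longrightarrow> agen m k i \<in> carrier (Gmk m k)"
  unfolding agen_eq Gmk_eq carrier_FactGroup RCOSETS_def by (blast dest: gen_in_carrier)

lemma rcoset_hom_Gmk:
  "(\<lambda>w. relator_closure m k #>\<^bsub>FreeGroup {1..m+k+1}\<^esub> w) \<in> hom (FreeGroup {1..m+k+1}) (Gmk m k)"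
  unfolding Gmk_eq using normal.r_coset_hom_Mod[OF relator_closure_normal] .

lemma rcoset_eq_eval_word:
  assumes w: "w \<in> carrier (FreeGroup {1..m+k+1})"
  shows "relator_closure m k #>\<^bsub>FreeGroup {1..m+k+1}\<^esub> w = eval_word (Gmk m k) (agen m k) w"
proof (rule FreeGroup_hom_ext[OF group_Gmk rcoset_hom_Gmk _ _ w])
  show "eval_word (Gmk m k) (agen m k) \<in> hom (FreeGroup {1..m+k+1}) (Gmk m k)"
    by (rule eval_word_hom[OF group_Gmk]) (auto intro: agen_carrier)
next
  fix x assume "x \<in> {1..m+k+1}"
  then show "relator_closure m k #>\<^bsub>FreeGroup {1..m+k+1}\<^esub> gen x
      = eval_word (Gmk m k) (agen m k) (gen x)"
    using eval_word_gen[OF group_Gmk, of "agen m k" x] agen_carrier by (simp add: agen_eq)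
qed

lemma Gmk_carrier_eval_word:
  "g \<in> carrier (Gmk m k) \<Longrightarrow> \<exists>w\<in>carrier (FreeGroup {1..m+k+1}). g = eval_word (Gmk m k) (agen m k) w"
  using rcoset_eq_eval_word by (auto simp: Gmk_eq carrier_FactGroup)

lemma Gmk_closed_set:
  assumes "\<one>\<^bsub>Gmk m k\<^esub> \<in> M" and "\<forall>y\<in>M. \<forall>z\<in>M. y \<otimes>\<^bsub>Gmk m k\<^esub> z \<in> M"
    and "\<forall>i\<in>{1..m+k+1}. agen m k i \<in> M \<and> inv\<^bsub>Gmk m k\<^esub> (agen m k i) \<in> M"
  shows "carrier (Gmk m k) \<subseteq> M"
proof
  fix g assume "g \<in> carrier (Gmk m k)"
  then obtain w where "w \<in> carrier (FreeGroup {1..m+k+1})" "g = eval_word (Gmk m k) (agen m k) w"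
    using Gmk_carrier_eval_word by blast
  then show "g \<in> M"
    using eval_word_closed_set[OF assms] by (auto simp: carrier_FreeGroup)
qed

lemma eval_word_relator:
  assumes u: "fst ` set u \<subseteq> {1..m+k+1}" and r: "normalize u \<in> relators m k"
  shows "eval_word (Gmk m k) (agen m k) u = \<one>\<^bsub>Gmk m k\<^esub>"
proof -
  let ?F = "FreeGroup {1..m+k+1}"
  have rc: "normalize u \<in> carrier ?F" using r relators_carrier by blast
  have "eval_word (Gmk m k) (agen m k) u = eval_word (Gmk m k) (agen m k) (normalize u)"
    using eval_word_normalize[OF group_Gmk _ u] agen_carrier by auto
  also have "\<dots> = relator_closure m k #>\<^bsub>?F\<^esub> normalize u" using rcoset_eq_eval_word[OF rc] by simp
  also have "\<dots> = relator_closure m k"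
    using subgroup.rcos_const[OF normal_imp_subgroup[OF relator_closure_normal] group_FreeGroup]
      normal_closure_subset[OF relators_carrier group_FreeGroup] r
    unfolding relator_closure_def by blast
  finally show ?thesis by (simp add: Gmk_eq)
qed

lemma agen_comm:
  assumes "1 \<le> i" "i \<le> m"
  shows "agen m k i \<otimes>\<^bsub>Gmk m k\<^esub> agen m k (i+1) = agen m k (i+1) \<otimes>\<^bsub>Gmk m k\<^esub> agen m k i"
proof -
  let ?u = "[(i,True),(i+1,True),(i,False),(i+1,False)]"
  have "normalize ?u \<in> relators m k" using assms unfolding relators_def by blast
  then have "eval_word (Gmk m k) (agen m k) ?u = \<one>\<^bsub>Gmk m k\<^esub>"
    using eval_word_relator[of ?u] assms by auto
  then show ?thesis
    using group.commutator_eq_one_iff[OF group_Gmk agen_carrier agen_carrier, of i m k "i+1"] assms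
    by simp
qed

lemma agen_conj:
  assumes "1 \<le> j" "j \<le> k"
  shows "agen m k j \<otimes>\<^bsub>Gmk m k\<^esub> agen m k (m+j+1) = agen m k (m+j+1) \<otimes>\<^bsub>Gmk m k\<^esub> agen m k (m+j)"
proof -
  let ?u = "[(m+j+1,True),(j,False),(m+j+1,False),(m+j,True)]"
  have "normalize ?u \<in> relators m k" using assms unfolding relators_def by blast
  then have "eval_word (Gmk m k) (agen m k) ?u = \<one>\<^bsub>Gmk m k\<^esub>"
    using eval_word_relator[of ?u] assms by auto
  then show ?thesis
    using group.conjugator_eq_one_iff[OF group_Gmk agen_carrier agen_carrier agen_carrier,
        of j m k "m+j+1" "m+j"] assms
    by simp
qed

lemma Gmk_universal:
  assumes H: "group H" and f: "\<forall>i\<in>{1..m+k+1}. f i \<in> carrier H"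
    and comm: "\<forall>i. 1 \<le> i \<and> i \<le> m \<longrightarrow> f i \<otimes>\<^bsub>H\<^esub> f (i+1) = f (i+1) \<otimes>\<^bsub>H\<^esub> f i"
    and conj: "\<forall>j. 1 \<le> j \<and> j \<le> k \<longrightarrow> f j \<otimes>\<^bsub>H\<^esub> f (m+j+1) = f (m+j+1) \<otimes>\<^bsub>H\<^esub> f (m+j)"
  shows "\<exists>h\<in>hom (Gmk m k) H. \<forall>i\<in>{1..m+k+1}. h (agen m k i) = f i"
proof -
  let ?F = "FreeGroup {1..m+k+1}"
  have eh: "eval_word H f \<in> hom ?F H" by (rule eval_word_hom[OF H f])
  have "relators m k \<subseteq> kernel ?F H (eval_word H f)"
  proof
    fix r assume r: "r \<in> relators m k"
    obtain u where "r = normalize u" "fst ` set u \<subseteq> {1..m+k+1}" "eval_word H f u = \<one>\<^bsub>H\<^esub>"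
    proof (cases rule: UnE[OF r[unfolded relators_def]])
      case 1
      then obtain i where "r = normalize [(i,True),(i+1,True),(i,False),(i+1,False)]" "1 \<le> i" "i \<le> m"
        by blast
      with that show ?thesis
        using group.commutator_eq_one_iff[OF H, of "f i" "f (i+1)"] f comm by auto
    next
      case 2
      then obtain j where "r = normalize [(m+j+1,True),(j,False),(m+j+1,False),(m+j,True)]"
        "1 \<le> j" "j \<le> k"
        by blast
      with that show ?thesis
        using group.conjugator_eq_one_iff[OF H, of "f j" "f (m+j+1)" "f (m+j)"] f conj by auto
    qed
    then show "r \<in> kernel ?F H (eval_word H f)"
      using r relators_carrier[of m k] eval_word_normalize[OF H f] by (auto simp: kernel_def)
  qed
  then have "relator_closure m k \<subseteq> kernel ?F H (eval_word H f)"
    unfolding relator_closure_def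
    using eh H group_FreeGroup
    by (intro normal_closure_minimal group_hom.normal_kernel) (simp_all add: group_hom_def group_hom_axioms_def)
  then obtain h where h: "h \<in> hom (Gmk m k) H"
    and hx: "\<forall>x\<in>carrier ?F. h (relator_closure m k #>\<^bsub>?F\<^esub> x) = eval_word H f x"
    using FactGroup_induced_hom[OF group_FreeGroup H relator_closure_normal eh] unfolding Gmk_eq by blast
  have "h (agen m k i) = f i" if i: "i \<in> {1..m+k+1}" for i
    unfolding agen_eq using hx gen_in_carrier[OF i] eval_word_gen[OF H, of f i] f i by simp
  with h show ?thesis by blast
qed

lemma (in group) inv_mult_cancel_left [simp]:
  "x \<in> carrier G \<Longrightarrow> y \<in> carrier G \<Longrightarrow> inv x \<otimes> (x \<otimes> y) = y"
  by (simp add: m_assoc[symmetric])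

lemma (in group) mult_inv_cancel_left [simp]:
  "x \<in> carrier G \<Longrightarrow> y \<in> carrier G \<Longrightarrow> x \<otimes> (inv x \<otimes> y) = y"
  by (simp add: m_assoc[symmetric])

lemma gprod_Nil [simp]: "gprod G [] = \<one>\<^bsub>G\<^esub>"
  by (simp add: gprod_def)

lemma gprod_Cons [simp]: "gprod G (x # xs) = x \<otimes>\<^bsub>G\<^esub> gprod G xs"
  by (simp add: gprod_def)

lemma gprod_closed: "group G \<Longrightarrow> set xs \<subseteq> carrier G \<Longrightarrow> gprod G xs \<in> carrier G"
  by (induction xs) (auto intro: group.is_monoid monoid.m_closed)

lemma gprod_snoc:
  "group G \<Longrightarrow> set xs \<subseteq> carrier G \<Longrightarrow> x \<in> carrier G \<Longrightarrow>
   gprod G (xs @ [x]) = gprod G xs \<otimes>\<^bsub>G\<^esub> x"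
  by (induction xs) (simp_all add: group.is_monoid monoid.m_assoc gprod_closed)

lemma (in group) inv_mult_eq_of_conj:
  assumes "x \<in> carrier G" "y \<in> carrier G" "z \<in> carrier G" and "x \<otimes> y = y \<otimes> z"
  shows "inv y \<otimes> x = z \<otimes> inv y"
proof -
  have "inv y \<otimes> x \<otimes> y = z" using assms by (simp add: m_assoc)
  then show ?thesis using assms by (metis inv_closed inv_solve_right m_closed)
qed

lemma (in group) generate_conj_closed:
  assumes S: "S \<subseteq> carrier G" and x: "x \<in> carrier G"
    and gens: "\<forall>g\<in>S. x \<otimes> g \<otimes> inv x \<in> generate G S"
    and h: "h \<in> generate G S"
  shows "x \<otimes> h \<otimes> inv x \<in> generate G S"
  using h
proof (induction rule: generate.induct)
  case one then show ?case using x by (simp add: generate.one)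
next
  case (incl h) then show ?case using gens by blast
next
  case (inv h)
  then have "h \<in> carrier G" using S by blast
  then have "x \<otimes> inv h \<otimes> inv x = inv (x \<otimes> h \<otimes> inv x)"
    using x by (simp add: inv_mult_group m_assoc)
  then show ?case using generate_m_inv_closed[OF S] gens inv by simp
next
  case (eng h1 h2)
  then have "h1 \<in> carrier G" "h2 \<in> carrier G" using generate_in_carrier[OF S] by auto
  then have "x \<otimes> (h1 \<otimes> h2) \<otimes> inv x = (x \<otimes> h1 \<otimes> inv x) \<otimes> (x \<otimes> h2 \<otimes> inv x)"
    using x by (simp add: m_assoc)
  then show ?case using eng generate.eng by metis
qed

definition conj_stable :: "('a, 'b) monoid_scheme \<Rightarrow> 'a set \<Rightarrow> 'a set" where
  "conj_stable G H = {x \<in> carrier G. \<forall>h\<in>H.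
     x \<otimes>\<^bsub>G\<^esub> h \<otimes>\<^bsub>G\<^esub> inv\<^bsub>G\<^esub> x \<in> H \<and> inv\<^bsub>G\<^esub> x \<otimes>\<^bsub>G\<^esub> h \<otimes>\<^bsub>G\<^esub> x \<in> H}"

lemma (in group) conj_stable_mult:
  assumes H: "H \<subseteq> carrier G" and x: "x \<in> conj_stable G H" and y: "y \<in> conj_stable G H"
  shows "x \<otimes> y \<in> conj_stable G H"
proof -
  have xc: "x \<in> carrier G" and yc: "y \<in> carrier G" using x y by (auto simp: conj_stable_def)
  have "x \<otimes> y \<otimes> h \<otimes> inv (x \<otimes> y) = x \<otimes> (y \<otimes> h \<otimes> inv y) \<otimes> inv x"
    "inv (x \<otimes> y) \<otimes> h \<otimes> (x \<otimes> y) = inv y \<otimes> (inv x \<otimes> h \<otimes> x) \<otimes> y" if "h \<in> H" for h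
    using that H xc yc by (auto simp: m_assoc inv_mult_group)
  then show ?thesis using x y xc yc by (simp add: conj_stable_def)
qed

lemma (in group) conj_stable_inv: "x \<in> conj_stable G H \<Longrightarrow> inv x \<in> conj_stable G H"
  by (auto simp: conj_stable_def)

lemma (in group) subgroup_subset_conj_stable:
  "subgroup H G \<Longrightarrow> H \<subseteq> conj_stable G H"
  by (auto simp: conj_stable_def subgroup.m_closed subgroup.m_inv_closed subgroup.mem_carrier)

lemma (in group) normal_if_conj_stable:
  "subgroup H G \<Longrightarrow> carrier G \<subseteq> conj_stable G H \<Longrightarrow> H \<lhd> G"
  unfolding normal_inv_iff conj_stable_def by blast

section \<open>The fibration \<open>G\<^sub>m\<^sub>,\<^sub>k \<rightarrow> \<int>\<close>\<close>

locale Gmk_group =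
  fixes m k :: nat
  assumes k_le_m: "k \<le> m"
begin

abbreviation "G \<equiv> Gmk m k"
abbreviation "a \<equiv> agen m k"
abbreviation "F \<equiv> Fsub m k"
abbreviation "gens \<equiv> Aelt m k ` {1..m} \<union> Belt m k ` {1..k}"

sublocale G: group G by (rule group_Gmk)

text \<open>The relations make \<open>a\<^sub>1 a\<^sub>u\<^sup>-\<^sup>1\<close> and \<open>a\<^sub>u\<^sup>-\<^sup>1 a\<^sub>1\<close> telescope along
  \<open>u = 1, 2, \<dots>, m+k+1\<close>: each step multiplies by one \<open>A\<^sub>i\<close> or \<open>B\<^sub>j\<close>.\<close>
definition lquot :: "nat \<Rightarrow> nat word set" where
  "lquot u = a 1 \<otimes>\<^bsub>G\<^esub> inv\<^bsub>G\<^esub> (a u)"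

definition rquot :: "nat \<Rightarrow> nat word set" where
  "rquot u = inv\<^bsub>G\<^esub> (a u) \<otimes>\<^bsub>G\<^esub> a 1"

lemma agen_1_carrier: "a 1 \<in> carrier G"
  by (simp add: agen_carrier)

lemma Aelt_carrier: "1 \<le> i \<Longrightarrow> i \<le> m \<Longrightarrow> Aelt m k i \<in> carrier G"
  unfolding Aelt_def by (simp add: agen_carrier)

lemma Belt_carrier: "1 \<le> j \<Longrightarrow> j \<le> k \<Longrightarrow> Belt m k j \<in> carrier G"
  unfolding Belt_def by (simp add: agen_carrier)

lemma gens_carrier: "gens \<subseteq> carrier G"
  using Aelt_carrier Belt_carrier by auto

lemma subgroup_F: "subgroup F G"
  unfolding Fsub_def by (rule G.generate_is_subgroup[OF gens_carrier])

lemma Aelt_in_F: "1 \<le> i \<Longrightarrow> i \<le> m \<Longrightarrow> Aelt m k i \<in> F"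
  unfolding Fsub_def by (rule generate.incl) auto

lemma Belt_in_F: "1 \<le> j \<Longrightarrow> j \<le> k \<Longrightarrow> Belt m k j \<in> F"
  unfolding Fsub_def by (rule generate.incl) auto

lemma F_carrier: "x \<in> F \<Longrightarrow> x \<in> carrier G"
  using subgroup.mem_carrier[OF subgroup_F] .

lemma F_mult: "x \<in> F \<Longrightarrow> y \<in> F \<Longrightarrow> x \<otimes>\<^bsub>G\<^esub> y \<in> F"
  using subgroup.m_closed[OF subgroup_F] .

lemma F_inv: "x \<in> F \<Longrightarrow> inv\<^bsub>G\<^esub> x \<in> F"
  using subgroup.m_inv_closed[OF subgroup_F] .

lemma lquot_1: "lquot 1 = \<one>\<^bsub>G\<^esub>"
  unfolding lquot_def using agen_1_carrier by simp

lemma rquot_1: "rquot 1 = \<one>\<^bsub>G\<^esub>"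
  unfolding rquot_def using agen_1_carrier by simp

lemma lquot_step_A:
  assumes "1 \<le> i" "i \<le> m"
  shows "lquot (i+1) = lquot i \<otimes>\<^bsub>G\<^esub> Aelt m k i"
proof -
  have x: "a i \<in> carrier G" "a (i+1) \<in> carrier G" using agen_carrier assms by auto
  have "inv\<^bsub>G\<^esub> (a (i+1)) \<otimes>\<^bsub>G\<^esub> a i = a i \<otimes>\<^bsub>G\<^esub> inv\<^bsub>G\<^esub> (a (i+1))"
    using G.inv_mult_eq_of_conj[OF x(1,2,1) agen_comm[OF assms]] .
  then show ?thesis
    unfolding lquot_def Aelt_def using x agen_1_carrier by (simp add: G.m_assoc)
qed

lemma lquot_step_B:
  assumes "1 \<le> j" "j \<le> k"
  shows "lquot (m+j+1) = lquot (m+j) \<otimes>\<^bsub>G\<^esub> Belt m k j"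
proof -
  have x: "a j \<in> carrier G" "a (m+j+1) \<in> carrier G" "a (m+j) \<in> carrier G"
    using agen_carrier assms by auto
  have "inv\<^bsub>G\<^esub> (a (m+j+1)) \<otimes>\<^bsub>G\<^esub> a j = a (m+j) \<otimes>\<^bsub>G\<^esub> inv\<^bsub>G\<^esub> (a (m+j+1))"
    using G.inv_mult_eq_of_conj[OF x agen_conj[OF assms]] .
  then show ?thesis
    unfolding lquot_def Belt_def using x agen_1_carrier by (simp add: G.m_assoc)
qed

lemma rquot_step_A:
  assumes "1 \<le> i" "i \<le> m"
  shows "rquot (i+1) = Aelt m k i \<otimes>\<^bsub>G\<^esub> rquot i"
  unfolding rquot_def Aelt_def using agen_carrier assms by (simp add: G.m_assoc)

lemma rquot_step_B:
  assumes "1 \<le> j" "j \<le> k"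
  shows "rquot (m+j+1) = Belt m k j \<otimes>\<^bsub>G\<^esub> rquot j"
  unfolding rquot_def Belt_def using agen_carrier assms k_le_m by (simp add: G.m_assoc)

lemma quot_in_F: "u \<in> {1..m+k+1} \<Longrightarrow> lquot u \<in> F \<and> rquot u \<in> F"
proof (induction u rule: less_induct)
  case (less u)
  consider "u = 1" | i where "1 \<le> i" "i \<le> m" "u = i + 1" | j where "1 \<le> j" "j \<le> k" "u = m + j + 1"
  proof -
    have "u = 1 \<or> (1 \<le> u - 1 \<and> u - 1 \<le> m \<and> u = u - 1 + 1)
        \<or> (1 \<le> u - m - 1 \<and> u - m - 1 \<le> k \<and> u = m + (u - m - 1) + 1)"
      using less.prems by auto
    then show thesis using that by blast
  qed
  then show ?case
  proof cases
    case 1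
    then show ?thesis using lquot_1 rquot_1 subgroup.one_closed[OF subgroup_F] by simp
  next
    case (2 i)
    then show ?thesis using less lquot_step_A rquot_step_A Aelt_in_F F_mult by simp
  next
    case (3 j)
    then have "lquot (m+j) \<in> F" "rquot j \<in> F" using less k_le_m by auto
    then show ?thesis using 3 lquot_step_B rquot_step_B Belt_in_F F_mult by simp
  qed
qed

lemma lquot_carrier: "u \<in> {1..m+k+1} \<Longrightarrow> lquot u \<in> carrier G"
  using quot_in_F F_carrier by blast

lemma agen_eq_lquot: "u \<in> {1..m+k+1} \<Longrightarrow> a u = inv\<^bsub>G\<^esub> (lquot u) \<otimes>\<^bsub>G\<^esub> a 1"
  unfolding lquot_def using agen_carrier by (simp add: G.inv_mult_group G.m_assoc)

lemma conj_Aelt: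
  assumes "1 \<le> i" "i \<le> m"
  shows "a 1 \<otimes>\<^bsub>G\<^esub> Aelt m k i \<otimes>\<^bsub>G\<^esub> inv\<^bsub>G\<^esub> (a 1) = lquot (i+1) \<otimes>\<^bsub>G\<^esub> inv\<^bsub>G\<^esub> (lquot i)"
  unfolding lquot_def Aelt_def using agen_carrier assms by (simp add: G.m_assoc G.inv_mult_group)

lemma conj_Belt:
  assumes "1 \<le> j" "j \<le> k"
  shows "a 1 \<otimes>\<^bsub>G\<^esub> Belt m k j \<otimes>\<^bsub>G\<^esub> inv\<^bsub>G\<^esub> (a 1) = lquot (m+j+1) \<otimes>\<^bsub>G\<^esub> inv\<^bsub>G\<^esub> (lquot j)"
  unfolding lquot_def Belt_def using agen_carrier assms k_le_m by (simp add: G.m_assoc G.inv_mult_group)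

lemma inv_conj_Aelt:
  assumes "1 \<le> i" "i \<le> m"
  shows "inv\<^bsub>G\<^esub> (a 1) \<otimes>\<^bsub>G\<^esub> Aelt m k i \<otimes>\<^bsub>G\<^esub> a 1 = inv\<^bsub>G\<^esub> (rquot i) \<otimes>\<^bsub>G\<^esub> rquot (i+1)"
proof -
  have x: "a i \<in> carrier G" "a (i+1) \<in> carrier G" using agen_carrier assms by auto
  have "Aelt m k i = a i \<otimes>\<^bsub>G\<^esub> inv\<^bsub>G\<^esub> (a (i+1))"
    unfolding Aelt_def using G.inv_mult_eq_of_conj[OF x(1,2,1) agen_comm[OF assms]] .
  then show ?thesis unfolding rquot_def using x agen_1_carrier by (simp add: G.m_assoc G.inv_mult_group)
qed

lemma inv_conj_Belt:
  assumes "1 \<le> j" "j \<le> k"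
  shows "inv\<^bsub>G\<^esub> (a 1) \<otimes>\<^bsub>G\<^esub> Belt m k j \<otimes>\<^bsub>G\<^esub> a 1 = inv\<^bsub>G\<^esub> (rquot (m+j)) \<otimes>\<^bsub>G\<^esub> rquot (m+j+1)"
proof -
  have x: "a j \<in> carrier G" "a (m+j+1) \<in> carrier G" "a (m+j) \<in> carrier G"
    using agen_carrier assms by auto
  have "Belt m k j = a (m+j) \<otimes>\<^bsub>G\<^esub> inv\<^bsub>G\<^esub> (a (m+j+1))"
    unfolding Belt_def using G.inv_mult_eq_of_conj[OF x agen_conj[OF assms]] .
  then show ?thesis unfolding rquot_def using x agen_1_carrier by (simp add: G.m_assoc G.inv_mult_group)
qed

lemma conj_agen_1_in_F:
  assumes "x \<in> carrier G" and "x = a 1 \<or> x = inv\<^bsub>G\<^esub> (a 1)" and "h \<in> F"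
  shows "x \<otimes>\<^bsub>G\<^esub> h \<otimes>\<^bsub>G\<^esub> inv\<^bsub>G\<^esub> x \<in> F"
  unfolding Fsub_def
proof (rule G.generate_conj_closed[OF gens_carrier assms(1) _ assms(3)[unfolded Fsub_def]], rule ballI)
  fix g assume "g \<in> gens"
  then consider i where "1 \<le> i" "i \<le> m" "g = Aelt m k i" | j where "1 \<le> j" "j \<le> k" "g = Belt m k j"
    by auto
  then have "x \<otimes>\<^bsub>G\<^esub> g \<otimes>\<^bsub>G\<^esub> inv\<^bsub>G\<^esub> x \<in> F"
  proof cases
    case (1 i)
    then show ?thesis using assms(2) quot_in_F conj_Aelt inv_conj_Aelt F_mult F_inv agen_1_carrier
      by auto
  next
    case (2 j)
    then show ?thesis using assms(2) quot_in_F conj_Belt inv_conj_Belt F_mult F_inv agen_1_carrier k_le_m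
      by auto
  qed
  then show "x \<otimes>\<^bsub>G\<^esub> g \<otimes>\<^bsub>G\<^esub> inv\<^bsub>G\<^esub> x \<in> generate G gens" by (simp add: Fsub_def)
qed

lemma agen_1_conj_stable: "a 1 \<in> conj_stable G F"
  using conj_agen_1_in_F[of "a 1"] conj_agen_1_in_F[of "inv\<^bsub>G\<^esub> (a 1)"] agen_1_carrier
  by (simp add: conj_stable_def)

lemma normal_F: "F \<lhd> G"
proof (rule G.normal_if_conj_stable[OF subgroup_F], rule Gmk_closed_set)
  have F_stable: "F \<subseteq> conj_stable G F" by (rule G.subgroup_subset_conj_stable[OF subgroup_F])
  have "a u \<in> conj_stable G F" if "u \<in> {1..m+k+1}" for u
    using agen_eq_lquot[OF that] quot_in_F[OF that] F_stable agen_1_conj_stable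
      G.conj_stable_inv G.conj_stable_mult[OF subgroup.subset[OF subgroup_F]] by (metis subsetD)
  then show "\<forall>i\<in>{1..m+k+1}. a i \<in> conj_stable G F \<and> inv\<^bsub>G\<^esub> (a i) \<in> conj_stable G F"
    using G.conj_stable_inv by blast
  show "\<one>\<^bsub>G\<^esub> \<in> conj_stable G F"
    using F_stable subgroup.one_closed[OF subgroup_F] by blast
  show "\<forall>y\<in>conj_stable G F. \<forall>z\<in>conj_stable G F. y \<otimes>\<^bsub>G\<^esub> z \<in> conj_stable G F"
    using G.conj_stable_mult[OF subgroup.subset[OF subgroup_F]] by blast
qed

lemma F_mult_generate_agen_1: "F <#>\<^bsub>G\<^esub> generate G {a 1} = carrier G"
proof
  have "subgroup (generate G {a 1}) G"
    using G.generate_is_subgroup agen_1_carrier by simp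
  then have sub: "subgroup (F <#>\<^bsub>G\<^esub> generate G {a 1}) G"
    using normal_F by (intro second_isomorphism_grp.normal_set_mult_subgroup)
      (simp add: second_isomorphism_grp_def second_isomorphism_grp_axioms_def)
  then show "F <#>\<^bsub>G\<^esub> generate G {a 1} \<subseteq> carrier G" by (rule subgroup.subset)
  have "a u \<in> F <#>\<^bsub>G\<^esub> generate G {a 1}" if "u \<in> {1..m+k+1}" for u
    using agen_eq_lquot[OF that] quot_in_F[OF that] F_inv generate.incl[of "a 1" "{a 1}" G]
    unfolding set_mult_def by blast
  then show "carrier G \<subseteq> F <#>\<^bsub>G\<^esub> generate G {a 1}"
    using subgroup.one_closed[OF sub] subgroup.m_closed[OF sub] subgroup.m_inv_closed[OF sub]
    by (intro Gmk_closed_set) auto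
qed

lemma exists_hom_int: "\<exists>h\<in>hom G integer_group. \<forall>i\<in>{1..m+k+1}. h (a i) = 1"
  using Gmk_universal[OF group_integer_group, of m k "\<lambda>_. 1"] by simp

context
  fixes h assumes h: "h \<in> hom G integer_group" and h_agen: "\<forall>i\<in>{1..m+k+1}. h (a i) = 1"
begin

lemma hom_agen_1_int_pow: "h (a 1 [^]\<^bsub>G\<^esub> (n::int)) = n"
  using hom_int_pow[OF h agen_1_carrier group_Gmk group_integer_group] h_agen by simp

lemma F_subset_kernel: "F \<subseteq> kernel G integer_group h"
proof -
  have "g \<in> kernel G integer_group h" if "g \<in> gens" for g
  proof -
    have hom_inv: "h (inv\<^bsub>G\<^esub> x) = - h x" if "x \<in> carrier G" for x
      using hom_inv_group[OF h group_Gmk group_integer_group that] by simp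
    from \<open>g \<in> gens\<close> show ?thesis
      using h_agen hom_mult[OF h] hom_inv agen_carrier Aelt_carrier Belt_carrier k_le_m
      by (auto simp: kernel_def Aelt_def Belt_def)
  qed
  moreover have "group_hom G integer_group h"
    using h group_Gmk by (simp add: group_hom_def group_hom_axioms_def)
  ultimately show ?thesis
    unfolding Fsub_def by (intro G.generate_subgroup_incl group_hom.subgroup_kernel) auto
qed

lemma kernel_eq_F: "kernel G integer_group h = F"
proof
  show "kernel G integer_group h \<subseteq> F"
  proof
    fix g assume g: "g \<in> kernel G integer_group h"
    then obtain f y where f: "f \<in> F" and y: "y \<in> generate G {a 1}" and g_eq: "g = f \<otimes>\<^bsub>G\<^esub> y"
      using F_mult_generate_agen_1 unfolding set_mult_def kernel_def by blast
    obtain n where n: "y = a 1 [^]\<^bsub>G\<^esub> (n::int)"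
      using y G.generate_pow[OF agen_1_carrier] by auto
    have "h g = h f + n"
      using g_eq n hom_mult[OF h] F_carrier[OF f] agen_1_carrier hom_agen_1_int_pow by simp
    then have "n = 0" using g F_subset_kernel f by (auto simp: kernel_def)
    then show "g \<in> F" using g_eq n f F_carrier by simp
  qed
qed (rule F_subset_kernel)

end

lemma agen_1_int_pow_eq_one:
  assumes "a 1 [^]\<^bsub>G\<^esub> (n::int) = \<one>\<^bsub>G\<^esub>"
  shows "n = 0"
proof -
  obtain h where h: "h \<in> hom G integer_group" "\<forall>i\<in>{1..m+k+1}. h (a i) = 1"
    using exists_hom_int by blast
  then have "h \<one>\<^bsub>G\<^esub> = 0" using hom_one[OF _ group_Gmk group_integer_group] by simp
  with hom_agen_1_int_pow[OF h, of n] assms show ?thesis by simp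
qed

lemma generate_agen_1_Int_F: "generate G {a 1} \<inter> F = {\<one>\<^bsub>G\<^esub>}"
proof
  show "generate G {a 1} \<inter> F \<subseteq> {\<one>\<^bsub>G\<^esub>}"
  proof
    fix x assume x: "x \<in> generate G {a 1} \<inter> F"
    obtain h where h: "h \<in> hom G integer_group" "\<forall>i\<in>{1..m+k+1}. h (a i) = 1"
      using exists_hom_int by blast
    obtain n where n: "x = a 1 [^]\<^bsub>G\<^esub> (n::int)"
      using x G.generate_pow[OF agen_1_carrier] by auto
    have "h x = 0" using x kernel_eq_F[OF h] by (auto simp: kernel_def)
    then have "n = 0" using n hom_agen_1_int_pow[OF h] by simp
    then show "x \<in> {\<one>\<^bsub>G\<^esub>}" using n by simp
  qed
qed (use generate.one subgroup.one_closed[OF subgroup_F] in auto)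

lemma Pprod_eq_lquot: "i \<le> m \<Longrightarrow> Pprod m k i = lquot (i+1)"
proof (induction i)
  case 0
  then show ?case using lquot_1 by (simp add: Pprod_def)
next
  case (Suc i)
  have "set (map (Aelt m k) [1..<i+1]) \<subseteq> carrier G" using Aelt_carrier Suc.prems by auto
  then have "Pprod m k (Suc i) = Pprod m k i \<otimes>\<^bsub>G\<^esub> Aelt m k (Suc i)"
    unfolding Pprod_def using gprod_snoc[OF group_Gmk _ Aelt_carrier] Suc.prems by simp
  then show ?case using Suc lquot_step_A[of "Suc i"] by simp
qed

lemma lquot_mult_Qprod: "j \<le> k \<Longrightarrow> lquot (m+1) \<otimes>\<^bsub>G\<^esub> Qprod m k j = lquot (m+j+1)"
proof (induction j)
  case 0
  then show ?case using lquot_carrier[of "m+1"] by (simp add: Qprod_def)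
next
  case (Suc j)
  have sc: "set (map (Belt m k) [1..<j+1]) \<subseteq> carrier G" using Belt_carrier Suc.prems by auto
  then have "Qprod m k (Suc j) = Qprod m k j \<otimes>\<^bsub>G\<^esub> Belt m k (Suc j)"
    unfolding Qprod_def using gprod_snoc[OF group_Gmk _ Belt_carrier] Suc.prems by simp
  moreover have "Qprod m k j \<in> carrier G"
    unfolding Qprod_def using gprod_closed[OF group_Gmk sc] .
  ultimately show ?case
    using Suc lquot_step_B[of "Suc j"] lquot_carrier[of "m+1"] Belt_carrier[of "Suc j"]
    by (simp add: G.m_assoc[symmetric])
qed

lemma monodromy_Aelt:
  assumes "i \<in> {1..m}"
  shows "a 1 \<otimes>\<^bsub>G\<^esub> Aelt m k i \<otimes>\<^bsub>G\<^esub> inv\<^bsub>G\<^esub> (a 1)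
    = Pprod m k (i - 1) \<otimes>\<^bsub>G\<^esub> Aelt m k i \<otimes>\<^bsub>G\<^esub> inv\<^bsub>G\<^esub> (Pprod m k (i - 1))"
proof -
  have "i - 1 \<le> m" using assms by auto
  from Pprod_eq_lquot[OF this] have "Pprod m k (i - 1) = lquot i" using assms by simp
  then show ?thesis using assms conj_Aelt[of i] lquot_step_A[of i] by simp
qed

lemma monodromy_Belt:
  assumes "j \<in> {1..k}"
  shows "a 1 \<otimes>\<^bsub>G\<^esub> Belt m k j \<otimes>\<^bsub>G\<^esub> inv\<^bsub>G\<^esub> (a 1)
    = Pprod m k m \<otimes>\<^bsub>G\<^esub> Qprod m k j \<otimes>\<^bsub>G\<^esub> inv\<^bsub>G\<^esub> (Pprod m k (j - 1))"
proof -
  have "j - 1 \<le> m" using assms k_le_m by auto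
  from Pprod_eq_lquot[OF this] have "Pprod m k (j - 1) = lquot j" using assms by simp
  then show ?thesis using assms conj_Belt[of j] lquot_mult_Qprod[of j] Pprod_eq_lquot[of m] by simp
qed

end

section \<open>The monodromy automorphism of the free group\<close>

text \<open>Otherwise \<open>simp\<close> rewrites \<open>{1..m+k}\<close> to \<open>{Suc 0..m+k}\<close>, after which the
  group rules of \<open>FreeGroup {1..m+k}\<close> no longer match.\<close>
declare One_nat_def [simp del]

lemma upt_snoc_1: "1 \<le> n \<Longrightarrow> [1..<n+1] = [1..<n] @ [(n::nat)]"
  by (simp add: One_nat_def)

text \<open>On the free group \<open>E\<close> with basis \<open>x\<^sub>1, \<dots>, x\<^sub>m\<^sub>+\<^sub>k\<close> (standing for
  \<open>A\<^sub>1, \<dots>, A\<^sub>m, B\<^sub>1, \<dots>, B\<^sub>k\<close>) put \<open>R\<^sub>n = x\<^sub>1 \<cdots> x\<^sub>n\<close>. The monodromy \<open>\<phi>\<close> (\<open>mono\<close>) sends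
  \<open>x\<^sub>n \<mapsto> R\<^sub>n R\<^bsub>tail_idx n\<^esub>\<^sup>-\<^sup>1\<close>; its inverse sends \<open>x\<^sub>n \<mapsto> T\<^bsub>n-1\<^esub>\<^sup>-\<^sup>1 T\<^sub>n\<close>,
  where \<open>T\<^sub>n = x\<^sub>n T\<^bsub>tail_idx n\<^esub>\<close> is the preimage of \<open>R\<^sub>n\<close>.\<close>
locale free_monodromy =
  fixes m k :: nat
  assumes k_le_m: "k \<le> m"
begin

abbreviation "E \<equiv> FreeGroup {1..m+k}"

sublocale E: group E by (rule group_FreeGroup)

definition tail_idx :: "nat \<Rightarrow> nat" where
  "tail_idx n = (if n \<le> m then n - 1 else n - m - 1)"

definition Rprod :: "nat \<Rightarrow> nat word" where
  "Rprod n = gprod E (map gen [1..<n+1])"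

definition Tprod :: "nat \<Rightarrow> nat word" where
  "Tprod n = (if n \<le> m then gprod E (map gen (rev [1..<n+1]))
              else gen n \<otimes>\<^bsub>E\<^esub> gprod E (map gen (rev [1..<n-m])))"

definition mono :: "nat word \<Rightarrow> nat word" where
  "mono = eval_word E (\<lambda>n. Rprod n \<otimes>\<^bsub>E\<^esub> inv\<^bsub>E\<^esub> (Rprod (tail_idx n)))"

definition mono_inv :: "nat word \<Rightarrow> nat word" where
  "mono_inv = eval_word E (\<lambda>n. inv\<^bsub>E\<^esub> (Tprod (n - 1)) \<otimes>\<^bsub>E\<^esub> Tprod n)"

lemma gen_carrier_E: "n \<in> {1..m+k} \<Longrightarrow> gen n \<in> carrier E"
  by (rule gen_in_carrier)

lemma tail_idx_less: "1 \<le> n \<Longrightarrow> tail_idx n < n"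
  by (auto simp: tail_idx_def)

lemma tail_idx_le: "tail_idx n \<le> n"
  by (auto simp: tail_idx_def)

lemma Rprod_carrier: "n \<le> m+k \<Longrightarrow> Rprod n \<in> carrier E"
  unfolding Rprod_def by (rule gprod_closed[OF group_FreeGroup]) (auto intro: gen_in_carrier)

lemma Rprod_0: "Rprod 0 = \<one>\<^bsub>E\<^esub>"
  by (simp add: Rprod_def)

lemma Rprod_step: "1 \<le> n \<Longrightarrow> n \<le> m+k \<Longrightarrow> Rprod n = Rprod (n - 1) \<otimes>\<^bsub>E\<^esub> gen n"
proof -
  assume n: "1 \<le> n" "n \<le> m+k"
  have "set (map gen [1..<n]) \<subseteq> carrier E" "gen n \<in> carrier E"
    using n gen_carrier_E by auto
  from gprod_snoc[OF group_FreeGroup this] show ?thesis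
    unfolding Rprod_def using n by (simp add: upt_snoc_1)
qed

lemma Tprod_carrier: "n \<le> m+k \<Longrightarrow> Tprod n \<in> carrier E"
proof -
  assume n: "n \<le> m+k"
  have a: "set (map gen (rev [1..<n+1])) \<subseteq> carrier E"
    and b: "set (map gen (rev [1..<n-m])) \<subseteq> carrier E"
    using gen_carrier_E n by auto
  have "n > m \<Longrightarrow> gen n \<otimes>\<^bsub>E\<^esub> gprod E (map gen (rev [1..<n-m])) \<in> carrier E"
    by (rule E.m_closed[OF gen_carrier_E gprod_closed[OF group_FreeGroup b]]) (use n in auto)
  then show ?thesis unfolding Tprod_def using gprod_closed[OF group_FreeGroup a] by auto
qed

lemma Tprod_0: "Tprod 0 = \<one>\<^bsub>E\<^esub>"
  by (simp add: Tprod_def)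

lemma Tprod_step: "1 \<le> n \<Longrightarrow> n \<le> m+k \<Longrightarrow> Tprod n = gen n \<otimes>\<^bsub>E\<^esub> Tprod (tail_idx n)"
proof (cases "n \<le> m")
  case True
  assume "1 \<le> n"
  then have "rev [1..<n+1] = n # rev [1..<n - 1 + 1]" using upt_snoc_1 by simp
  moreover have "tail_idx n = n - 1" "n - 1 \<le> m" using True by (auto simp: tail_idx_def)
  ultimately show ?thesis using True unfolding Tprod_def by simp
next
  case False
  assume "n \<le> m + k"
  then have "tail_idx n = n - m - 1" "n - m - 1 \<le> m" "n - m - 1 + 1 = n - m"
    using False k_le_m by (auto simp: tail_idx_def)
  with False show ?thesis unfolding Tprod_def by simp
qed

lemma mono_hom: "mono \<in> hom E E"
  unfolding mono_def using Rprod_carrier tail_idx_le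
  by (intro eval_word_hom[OF group_FreeGroup]) (meson E.inv_closed E.m_closed atLeastAtMost_iff le_trans)

lemma mono_inv_hom: "mono_inv \<in> hom E E"
  unfolding mono_inv_def using Tprod_carrier by (intro eval_word_hom[OF group_FreeGroup]) auto

lemma mono_gen: "n \<in> {1..m+k} \<Longrightarrow> mono (gen n) = Rprod n \<otimes>\<^bsub>E\<^esub> inv\<^bsub>E\<^esub> (Rprod (tail_idx n))"
  unfolding mono_def using Rprod_carrier tail_idx_le[of n]
  by (intro eval_word_gen[OF group_FreeGroup]) auto

lemma mono_inv_gen: "n \<in> {1..m+k} \<Longrightarrow> mono_inv (gen n) = inv\<^bsub>E\<^esub> (Tprod (n - 1)) \<otimes>\<^bsub>E\<^esub> Tprod n"
  unfolding mono_inv_def using Tprod_carrier by (intro eval_word_gen[OF group_FreeGroup]) auto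

lemma mono_carrier: "w \<in> carrier E \<Longrightarrow> mono w \<in> carrier E"
  using mono_hom by (rule hom_in_carrier)

lemma mono_inv_carrier: "w \<in> carrier E \<Longrightarrow> mono_inv w \<in> carrier E"
  using mono_inv_hom by (rule hom_in_carrier)

lemma mono_mult: "u \<in> carrier E \<Longrightarrow> v \<in> carrier E \<Longrightarrow> mono (u \<otimes>\<^bsub>E\<^esub> v) = mono u \<otimes>\<^bsub>E\<^esub> mono v"
  using mono_hom by (rule hom_mult)

lemma mono_inv_mult:
  "u \<in> carrier E \<Longrightarrow> v \<in> carrier E \<Longrightarrow> mono_inv (u \<otimes>\<^bsub>E\<^esub> v) = mono_inv u \<otimes>\<^bsub>E\<^esub> mono_inv v"
  using mono_inv_hom by (rule hom_mult)

lemma mono_inverse: "u \<in> carrier E \<Longrightarrow> mono (inv\<^bsub>E\<^esub> u) = inv\<^bsub>E\<^esub> (mono u)"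
  using hom_inv_group[OF mono_hom group_FreeGroup group_FreeGroup] .

lemma mono_inv_inverse: "u \<in> carrier E \<Longrightarrow> mono_inv (inv\<^bsub>E\<^esub> u) = inv\<^bsub>E\<^esub> (mono_inv u)"
  using hom_inv_group[OF mono_inv_hom group_FreeGroup group_FreeGroup] .

lemma mono_inv_Rprod: "n \<le> m+k \<Longrightarrow> mono_inv (Rprod n) = Tprod n"
proof (induction n)
  case 0
  then show ?case using Rprod_0 Tprod_0 hom_one[OF mono_inv_hom group_FreeGroup group_FreeGroup] by simp
next
  case (Suc n)
  have "mono_inv (Rprod (Suc n)) = mono_inv (Rprod n) \<otimes>\<^bsub>E\<^esub> mono_inv (gen (Suc n))"
    using Rprod_step[of "Suc n"] Suc.prems Rprod_carrier gen_carrier_E mono_inv_mult by simp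
  also have "\<dots> = Tprod n \<otimes>\<^bsub>E\<^esub> (inv\<^bsub>E\<^esub> (Tprod n) \<otimes>\<^bsub>E\<^esub> Tprod (Suc n))"
    using Suc mono_inv_gen[of "Suc n"] by simp
  also have "\<dots> = Tprod (Suc n)" using Tprod_carrier Suc.prems by simp
  finally show ?case .
qed

lemma mono_Tprod: "n \<le> m+k \<Longrightarrow> mono (Tprod n) = Rprod n"
proof (induction n rule: less_induct)
  case (less n)
  show ?case
  proof (cases "n = 0")
    case True
    then show ?thesis using Rprod_0 Tprod_0 hom_one[OF mono_hom group_FreeGroup group_FreeGroup] by simp
  next
    case False
    then have n: "1 \<le> n" "n \<le> m+k" using less.prems by auto
    have s: "tail_idx n < n" "tail_idx n \<le> m+k" using tail_idx_less[OF n(1)] n by auto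
    have "mono (Tprod n) = mono (gen n) \<otimes>\<^bsub>E\<^esub> mono (Tprod (tail_idx n))"
      using Tprod_step[OF n] gen_carrier_E Tprod_carrier s n mono_mult by simp
    also have "\<dots> = Rprod n \<otimes>\<^bsub>E\<^esub> inv\<^bsub>E\<^esub> (Rprod (tail_idx n)) \<otimes>\<^bsub>E\<^esub> Rprod (tail_idx n)"
      using less s mono_gen n by simp
    also have "\<dots> = Rprod n" using Rprod_carrier s n by (simp add: E.m_assoc)
    finally show ?thesis .
  qed
qed

lemma mono_inv_mono: "w \<in> carrier E \<Longrightarrow> mono_inv (mono w) = w"
proof -
  assume w: "w \<in> carrier E"
  have "(mono_inv \<circ> mono) w = id w"
  proof (rule FreeGroup_hom_ext[OF group_FreeGroup hom_compose[OF mono_hom mono_inv_hom] _ _ w])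
    show "id \<in> hom E E" by (simp add: hom_def)
    fix n assume n: "n \<in> {1..m+k}"
    have s: "tail_idx n \<le> m+k" using tail_idx_le[of n] n by auto
    have "mono_inv (mono (gen n)) = mono_inv (Rprod n) \<otimes>\<^bsub>E\<^esub> inv\<^bsub>E\<^esub> (mono_inv (Rprod (tail_idx n)))"
      using mono_gen[OF n] Rprod_carrier n s mono_inv_mult mono_inv_inverse by simp
    also have "\<dots> = gen n"
      using mono_inv_Rprod s n Tprod_step[of n] gen_carrier_E[OF n] Tprod_carrier[OF s]
      by (simp add: E.m_assoc)
    finally show "(mono_inv \<circ> mono) (gen n) = id (gen n)" by simp
  qed
  then show ?thesis by simp
qed

lemma mono_mono_inv: "w \<in> carrier E \<Longrightarrow> mono (mono_inv w) = w"
proof -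
  assume w: "w \<in> carrier E"
  have "(mono \<circ> mono_inv) w = id w"
  proof (rule FreeGroup_hom_ext[OF group_FreeGroup hom_compose[OF mono_inv_hom mono_hom] _ _ w])
    show "id \<in> hom E E" by (simp add: hom_def)
    fix n assume n: "n \<in> {1..m+k}"
    then have n1: "n - 1 \<le> m+k" "n \<le> m+k" by auto
    have "mono (mono_inv (gen n)) = inv\<^bsub>E\<^esub> (mono (Tprod (n - 1))) \<otimes>\<^bsub>E\<^esub> mono (Tprod n)"
      using mono_inv_gen[OF n] Tprod_carrier n1 mono_mult mono_inverse by simp
    also have "\<dots> = gen n"
      using mono_Tprod n1 n Rprod_step[of n] gen_carrier_E[OF n] Rprod_carrier[OF n1(1)] by simp
    finally show "(mono \<circ> mono_inv) (gen n) = id (gen n)" by simp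
  qed
  then show ?thesis by simp
qed

end

section \<open>Free generation\<close>

lemma (in group) inv_mult_inv_conj:
  "p \<in> carrier G \<Longrightarrow> q \<in> carrier G \<Longrightarrow> r \<in> carrier G \<Longrightarrow>
   inv q \<otimes> inv (p \<otimes> (r \<otimes> inv q)) = inv r \<otimes> inv p"
  by (simp add: inv_mult_group m_assoc)

lemma BijGroup_mult:
  "f \<in> carrier (BijGroup S) \<Longrightarrow> g \<in> carrier (BijGroup S) \<Longrightarrow>
   f \<otimes>\<^bsub>BijGroup S\<^esub> g = (\<lambda>z\<in>S. f (g z))"
  by (simp add: BijGroup_def compose_def)

context free_monodromy
begin

abbreviation "Sym \<equiv> BijGroup (carrier E)"

text \<open>The action of \<open>G\<^sub>m\<^sub>,\<^sub>k\<close> on the set \<open>E\<close> in which \<open>a\<^sub>u\<close> acts by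
  \<open>z \<mapsto> R\<^bsub>u-1\<^esub>\<^sup>-\<^sup>1 \<phi>(z)\<close>; through \<open>\<theta>\<close> it restricts to the left regular action of \<open>E\<close>,
  which is faithful, so \<open>\<theta>\<close> is injective.\<close>
definition act :: "nat \<Rightarrow> nat word \<Rightarrow> nat word" where
  "act u = (\<lambda>z\<in>carrier E. inv\<^bsub>E\<^esub> (Rprod (u - 1)) \<otimes>\<^bsub>E\<^esub> mono z)"

definition lmult :: "nat word \<Rightarrow> nat word \<Rightarrow> nat word" where
  "lmult w = (\<lambda>z\<in>carrier E. w \<otimes>\<^bsub>E\<^esub> z)"

lemma Rprod_pred_carrier: "u \<in> {1..m+k+1} \<Longrightarrow> Rprod (u - 1) \<in> carrier E"
  by (rule Rprod_carrier) auto

lemma act_Bij: "u \<in> {1..m+k+1} \<Longrightarrow> act u \<in> carrier Sym"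
proof -
  assume u: "u \<in> {1..m+k+1}"
  note R = Rprod_pred_carrier[OF u]
  have "bij_betw (act u) (carrier E) (carrier E)"
  proof (rule bij_betw_byWitness[where f' = "\<lambda>y. mono_inv (Rprod (u - 1) \<otimes>\<^bsub>E\<^esub> y)"])
    show "\<forall>z\<in>carrier E. mono_inv (Rprod (u - 1) \<otimes>\<^bsub>E\<^esub> act u z) = z"
      using R mono_carrier mono_inv_mono by (simp add: act_def)
    show "\<forall>y\<in>carrier E. act u (mono_inv (Rprod (u - 1) \<otimes>\<^bsub>E\<^esub> y)) = y"
      using R mono_inv_carrier mono_mono_inv by (simp add: act_def)
    show "act u ` carrier E \<subseteq> carrier E"
      using R mono_carrier by (auto simp: act_def)
    show "(\<lambda>y. mono_inv (Rprod (u - 1) \<otimes>\<^bsub>E\<^esub> y)) ` carrier E \<subseteq> carrier E"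
      using R mono_inv_carrier by auto
  qed
  then show ?thesis by (simp add: BijGroup_def Bij_def act_def)
qed

lemma lmult_Bij: "w \<in> carrier E \<Longrightarrow> lmult w \<in> carrier Sym"
proof -
  assume w: "w \<in> carrier E"
  have "bij_betw (lmult w) (carrier E) (carrier E)"
    by (rule bij_betw_byWitness[where f' = "\<lambda>y. inv\<^bsub>E\<^esub> w \<otimes>\<^bsub>E\<^esub> y"])
      (use w in \<open>auto simp: lmult_def\<close>)
  then show ?thesis by (simp add: BijGroup_def Bij_def lmult_def)
qed

lemma lmult_hom: "lmult \<in> hom E Sym"
proof (rule homI)
  fix u v assume "u \<in> carrier E" "v \<in> carrier E"
  then show "lmult (u \<otimes>\<^bsub>E\<^esub> v) = lmult u \<otimes>\<^bsub>Sym\<^esub> lmult v"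
    by (simp add: BijGroup_mult lmult_Bij) (auto simp: lmult_def E.m_assoc)
qed (rule lmult_Bij)

lemma lmult_inj_on: "inj_on lmult (carrier E)"
proof (rule inj_onI)
  fix w w' assume "w \<in> carrier E" "w' \<in> carrier E" "lmult w = lmult w'"
  then have "lmult w \<one>\<^bsub>E\<^esub> = lmult w' \<one>\<^bsub>E\<^esub>" by simp
  with \<open>w \<in> carrier E\<close> \<open>w' \<in> carrier E\<close> show "w = w'" by (simp add: lmult_def)
qed

lemma act_mult_act:
  assumes "u \<in> {1..m+k+1}" "v \<in> {1..m+k+1}"
  shows "act u \<otimes>\<^bsub>Sym\<^esub> act v = (\<lambda>z\<in>carrier E.
    (inv\<^bsub>E\<^esub> (Rprod (u - 1)) \<otimes>\<^bsub>E\<^esub> mono (inv\<^bsub>E\<^esub> (Rprod (v - 1)))) \<otimes>\<^bsub>E\<^esub> mono (mono z))"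
proof -
  have "act u \<otimes>\<^bsub>Sym\<^esub> act v = (\<lambda>z\<in>carrier E. act u (act v z))"
    using BijGroup_mult act_Bij assms by blast
  also have "\<dots> = (\<lambda>z\<in>carrier E.
    (inv\<^bsub>E\<^esub> (Rprod (u - 1)) \<otimes>\<^bsub>E\<^esub> mono (inv\<^bsub>E\<^esub> (Rprod (v - 1)))) \<otimes>\<^bsub>E\<^esub> mono (mono z))"
    using Rprod_pred_carrier[OF assms(1)] Rprod_pred_carrier[OF assms(2)]
    by (intro restrict_ext) (simp add: act_def mono_carrier mono_mult E.m_assoc)
  finally show ?thesis .
qed

lemma mono_Rprod_step:
  "1 \<le> n \<Longrightarrow> n \<le> m+k \<Longrightarrow>
   mono (Rprod n) = mono (Rprod (n - 1)) \<otimes>\<^bsub>E\<^esub> (Rprod n \<otimes>\<^bsub>E\<^esub> inv\<^bsub>E\<^esub> (Rprod (tail_idx n)))"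
  using Rprod_step[of n] mono_mult Rprod_carrier[of "n - 1"] gen_carrier_E[of n] mono_gen[of n] by simp

lemma act_comm:
  assumes "1 \<le> i" "i \<le> m"
  shows "act i \<otimes>\<^bsub>Sym\<^esub> act (i+1) = act (i+1) \<otimes>\<^bsub>Sym\<^esub> act i"
proof -
  have R: "Rprod (i - 1) \<in> carrier E" "Rprod i \<in> carrier E" using assms Rprod_carrier by auto
  have "tail_idx i = i - 1" using assms by (simp add: tail_idx_def)
  then have "inv\<^bsub>E\<^esub> (Rprod (i - 1)) \<otimes>\<^bsub>E\<^esub> mono (inv\<^bsub>E\<^esub> (Rprod i))
      = inv\<^bsub>E\<^esub> (Rprod i) \<otimes>\<^bsub>E\<^esub> mono (inv\<^bsub>E\<^esub> (Rprod (i - 1)))"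
    using assms R mono_Rprod_step[of i] mono_inverse mono_carrier
      E.inv_mult_inv_conj[OF mono_carrier[OF R(1)] R(1) R(2)] by simp
  then show ?thesis using act_mult_act assms by simp
qed

lemma act_conj:
  assumes "1 \<le> j" "j \<le> k"
  shows "act j \<otimes>\<^bsub>Sym\<^esub> act (m+j+1) = act (m+j+1) \<otimes>\<^bsub>Sym\<^esub> act (m+j)"
proof -
  have R: "Rprod (m+j-1) \<in> carrier E" "Rprod (j - 1) \<in> carrier E" "Rprod (m+j) \<in> carrier E"
    using assms Rprod_carrier by auto
  have "tail_idx (m+j) = j - 1" using assms by (simp add: tail_idx_def)
  then have "inv\<^bsub>E\<^esub> (Rprod (j - 1)) \<otimes>\<^bsub>E\<^esub> mono (inv\<^bsub>E\<^esub> (Rprod (m+j)))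
      = inv\<^bsub>E\<^esub> (Rprod (m+j)) \<otimes>\<^bsub>E\<^esub> mono (inv\<^bsub>E\<^esub> (Rprod (m+j-1)))"
    using assms R mono_Rprod_step[of "m+j"] mono_inverse mono_carrier
      E.inv_mult_inv_conj[OF mono_carrier[OF R(1)] R(2) R(3)] by simp
  then show ?thesis using act_mult_act assms by simp
qed

lemma act_mult_lmult_gen:
  assumes n: "n \<in> {1..m+k}"
  shows "act (n+1) \<otimes>\<^bsub>Sym\<^esub> lmult (gen n) = act (tail_idx n + 1)"
proof -
  have s: "tail_idx n \<le> m+k" "n \<le> m+k" using n tail_idx_le[of n] by auto
  have "inv\<^bsub>E\<^esub> (Rprod n) \<otimes>\<^bsub>E\<^esub> mono (gen n \<otimes>\<^bsub>E\<^esub> z) = inv\<^bsub>E\<^esub> (Rprod (tail_idx n)) \<otimes>\<^bsub>E\<^esub> mono z"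
    if z: "z \<in> carrier E" for z
    using z gen_carrier_E[OF n] mono_mult mono_gen[OF n] Rprod_carrier[OF s(1)] Rprod_carrier[OF s(2)]
      mono_carrier[OF z] by (simp add: E.m_assoc)
  moreover have "n + 1 \<in> {1..m+k+1}" using n by auto
  ultimately show ?thesis
    using gen_carrier_E[OF n] by (simp add: BijGroup_mult act_Bij lmult_Bij) (auto simp: act_def lmult_def)
qed

end

sublocale Gmk_group \<subseteq> M: free_monodromy m k
  by unfold_locales (rule k_le_m)

context Gmk_group
begin

definition basis :: "nat \<Rightarrow> nat word set" where
  "basis n = (if n \<le> m then Aelt m k n else Belt m k (n - m))"

lemma theta_eq: "theta m k = eval_word G basis"
  by (simp add: theta_def basis_def[abs_def])

lemma basis_in_F: "n \<in> {1..m+k} \<Longrightarrow> basis n \<in> F"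
  unfolding basis_def using Aelt_in_F Belt_in_F by auto

lemma basis_carrier: "n \<in> {1..m+k} \<Longrightarrow> basis n \<in> carrier G"
  using basis_in_F F_carrier by blast

lemma theta_hom_subset: "S \<subseteq> {1..m+k} \<Longrightarrow> theta m k \<in> hom (FreeGroup S) G"
  unfolding theta_eq using basis_carrier by (intro eval_word_hom[OF group_Gmk]) blast

lemma theta_hom: "theta m k \<in> hom (FreeGroup {1..m+k}) G"
  by (rule theta_hom_subset) simp

lemma theta_gen: "n \<in> {1..m+k} \<Longrightarrow> theta m k (gen n) = basis n"
  unfolding theta_eq using basis_carrier by (intro eval_word_gen[OF group_Gmk]) blast

lemma theta_image: "theta m k ` carrier (FreeGroup {1..m+k}) = F"
proof
  show "theta m k ` carrier (FreeGroup {1..m+k}) \<subseteq> F"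
  proof (clarsimp simp: theta_eq carrier_FreeGroup)
    fix w :: "nat word" assume "fst ` set w \<subseteq> {1..m+k}"
    then show "eval_word G basis w \<in> F"
      using subgroup.one_closed[OF subgroup_F] F_mult basis_in_F F_inv
      by (intro eval_word_closed_set) auto
  qed
  have "group_hom (FreeGroup {1..m+k}) G (theta m k)"
    using theta_hom group_FreeGroup group_Gmk by (simp add: group_hom_def group_hom_axioms_def)
  moreover have "gens \<subseteq> theta m k ` carrier (FreeGroup {1..m+k})"
  proof
    fix g assume "g \<in> gens"
    then obtain n where n: "n \<in> {1..m+k}" "g = basis n"
    proof (elim UnE imageE)
      fix i assume "g = Aelt m k i" "i \<in> {1..m}"
      then show thesis using that[of i] by (simp add: basis_def)
    next
      fix j assume "g = Belt m k j" "j \<in> {1..k}"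
      then show thesis using that[of "m + j"] by (simp add: basis_def)
    qed
    then show "g \<in> theta m k ` carrier (FreeGroup {1..m+k})"
      using theta_gen[OF n(1)] gen_in_carrier[OF n(1)] n(2) by (metis image_eqI)
  qed
  ultimately show "F \<subseteq> theta m k ` carrier (FreeGroup {1..m+k})"
    unfolding Fsub_def by (intro G.generate_subgroup_incl group_hom.img_is_subgroup)
qed

lemma basis_eq_agen: "n \<in> {1..m+k} \<Longrightarrow> basis n = inv\<^bsub>G\<^esub> (a (n+1)) \<otimes>\<^bsub>G\<^esub> a (M.tail_idx n + 1)"
  by (auto simp: basis_def Aelt_def Belt_def M.tail_idx_def)

lemma lquot_step: "n \<in> {1..m+k} \<Longrightarrow> lquot (n+1) = lquot n \<otimes>\<^bsub>G\<^esub> basis n"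
  using lquot_step_A lquot_step_B[of "n - m"] by (auto simp: basis_def)

lemma conj_basis:
  "n \<in> {1..m+k} \<Longrightarrow>
   a 1 \<otimes>\<^bsub>G\<^esub> basis n \<otimes>\<^bsub>G\<^esub> inv\<^bsub>G\<^esub> (a 1) = lquot (n+1) \<otimes>\<^bsub>G\<^esub> inv\<^bsub>G\<^esub> (lquot (M.tail_idx n + 1))"
  using conj_Aelt conj_Belt[of "n - m"] by (auto simp: basis_def M.tail_idx_def)

lemma exists_action_hom: "\<exists>\<rho>\<in>hom G M.Sym. \<forall>u\<in>{1..m+k+1}. \<rho> (a u) = M.act u"
  by (rule Gmk_universal[OF group_BijGroup]) (use M.act_Bij M.act_comm M.act_conj in auto)

lemma theta_inj: "inj_on (theta m k) (carrier (FreeGroup {1..m+k}))"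
proof -
  obtain \<rho> where \<rho>: "\<rho> \<in> hom G M.Sym" and \<rho>_agen: "\<forall>u\<in>{1..m+k+1}. \<rho> (a u) = M.act u"
    using exists_action_hom by blast
  have Sym: "group M.Sym" by (rule group_BijGroup)
  have lmult_eq: "(\<rho> \<circ> theta m k) w = M.lmult w" if w: "w \<in> carrier M.E" for w
  proof (rule FreeGroup_hom_ext[OF Sym hom_compose[OF theta_hom \<rho>] M.lmult_hom _ w])
    fix n assume n: "n \<in> {1..m+k}"
    have u: "n+1 \<in> {1..m+k+1}" "M.tail_idx n + 1 \<in> {1..m+k+1}" using n M.tail_idx_le[of n] by auto
    have "(\<rho> \<circ> theta m k) (gen n) = \<rho> (inv\<^bsub>G\<^esub> (a (n+1)) \<otimes>\<^bsub>G\<^esub> a (M.tail_idx n + 1))"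
      using theta_gen[OF n] basis_eq_agen[OF n] by simp
    also have "\<dots> = inv\<^bsub>M.Sym\<^esub> (M.act (n+1)) \<otimes>\<^bsub>M.Sym\<^esub> M.act (M.tail_idx n + 1)"
      using hom_mult[OF \<rho>] hom_inv_group[OF \<rho> group_Gmk Sym] agen_carrier u \<rho>_agen by simp
    also have "\<dots> = M.lmult (gen n)"
      using M.act_mult_lmult_gen[OF n] M.act_Bij[OF u(1)] M.lmult_Bij[OF M.gen_carrier_E[OF n]]
        group.inv_mult_cancel_left[OF Sym] by metis
    finally show "(\<rho> \<circ> theta m k) (gen n) = M.lmult (gen n)" .
  qed
  show ?thesis
  proof (rule inj_onI)
    fix w w' assume "w \<in> carrier M.E" "w' \<in> carrier M.E" "theta m k w = theta m k w'"
    then show "w = w'" using lmult_eq M.lmult_inj_on by (metis comp_apply inj_onD)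
  qed
qed

lemma theta_Rprod:
  assumes "k' \<le> k" "n \<le> m + k'"
  shows "theta m k (free_monodromy.Rprod m k' n) = lquot (n+1)"
  using assms(2)
proof (induction n)
  interpret M': free_monodromy m k' using assms(1) k_le_m by unfold_locales simp
  case 0
  then show ?case
    using lquot_1 hom_one[OF theta_hom_subset group_FreeGroup group_Gmk, of "{1..m+k'}"] assms(1)
    by (simp add: M'.Rprod_0 one_FreeGroup)
next
  interpret M': free_monodromy m k' using assms(1) k_le_m by unfold_locales simp
  case (Suc n)
  have n: "1 \<le> Suc n" "Suc n \<le> m + k'" "Suc n \<in> {1..m+k}" using Suc.prems assms(1) by auto
  have th: "theta m k \<in> hom (FreeGroup {1..m+k'}) G" using theta_hom_subset assms(1) by simp
  have "theta m k (M'.Rprod (Suc n)) = theta m k (M'.Rprod n) \<otimes>\<^bsub>G\<^esub> theta m k (gen (Suc n))"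
    using M'.Rprod_step[OF n(1,2)] hom_mult[OF th] M'.Rprod_carrier[of n] M'.gen_carrier_E[of "Suc n"] n
    by simp
  also have "\<dots> = lquot (Suc n) \<otimes>\<^bsub>G\<^esub> basis (Suc n)"
    using Suc theta_gen[OF n(3)] by (simp add: Suc_eq_plus1)
  also have "\<dots> = lquot (Suc n + 1)" using lquot_step[OF n(3)] by simp
  finally show ?case by simp
qed

text \<open>Stated for all \<open>k' \<le> k\<close>: applied in \<open>G\<^sub>m\<^sub>,\<^sub>m\<close> with \<open>k' = k\<close> it shows that
  \<open>\<phi>\<^sub>m\<^sub>,\<^sub>k\<close> is the restriction of \<open>\<phi>\<^sub>m\<^sub>,\<^sub>m\<close>.\<close>
lemma theta_mono:
  assumes k': "k' \<le> k" and w: "w \<in> carrier (FreeGroup {1..m+k'})"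
  shows "theta m k (free_monodromy.mono m k' w) = a 1 \<otimes>\<^bsub>G\<^esub> theta m k w \<otimes>\<^bsub>G\<^esub> inv\<^bsub>G\<^esub> (a 1)"
proof -
  interpret M': free_monodromy m k' using k' k_le_m by unfold_locales simp
  have th: "theta m k \<in> hom (FreeGroup {1..m+k'}) G" using theta_hom_subset k' by simp
  have conj: "(\<lambda>w. a 1 \<otimes>\<^bsub>G\<^esub> theta m k w \<otimes>\<^bsub>G\<^esub> inv\<^bsub>G\<^esub> (a 1)) \<in> hom (FreeGroup {1..m+k'}) G"
  proof (rule homI)
    fix u v assume u: "u \<in> carrier (FreeGroup {1..m+k'})" and v: "v \<in> carrier (FreeGroup {1..m+k'})"
    then have "theta m k u \<in> carrier G" "theta m k v \<in> carrier G" using th by (simp_all add: hom_in_carrier)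
    then show "a 1 \<otimes>\<^bsub>G\<^esub> theta m k (u \<otimes>\<^bsub>FreeGroup {1..m+k'}\<^esub> v) \<otimes>\<^bsub>G\<^esub> inv\<^bsub>G\<^esub> (a 1) =
      (a 1 \<otimes>\<^bsub>G\<^esub> theta m k u \<otimes>\<^bsub>G\<^esub> inv\<^bsub>G\<^esub> (a 1)) \<otimes>\<^bsub>G\<^esub> (a 1 \<otimes>\<^bsub>G\<^esub> theta m k v \<otimes>\<^bsub>G\<^esub> inv\<^bsub>G\<^esub> (a 1))"
      using hom_mult[OF th u v] agen_1_carrier by (simp add: G.m_assoc)
  qed (use th agen_1_carrier in \<open>simp add: hom_in_carrier\<close>)
  have "(theta m k \<circ> M'.mono) w = a 1 \<otimes>\<^bsub>G\<^esub> theta m k w \<otimes>\<^bsub>G\<^esub> inv\<^bsub>G\<^esub> (a 1)"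
  proof (rule FreeGroup_hom_ext[OF group_Gmk hom_compose[OF M'.mono_hom th] conj _ w])
    fix n assume n: "n \<in> {1..m+k'}"
    have nk: "n \<in> {1..m+k}" using n k' by auto
    have s: "M'.tail_idx n \<le> m + k'" "n \<le> m + k'" using M'.tail_idx_le[of n] n by auto
    have "M'.tail_idx n = M.tail_idx n" by (simp add: M'.tail_idx_def M.tail_idx_def)
    then have "theta m k (M'.mono (gen n)) = lquot (n+1) \<otimes>\<^bsub>G\<^esub> inv\<^bsub>G\<^esub> (lquot (M.tail_idx n + 1))"
      using M'.mono_gen[OF n] hom_mult[OF th] hom_inv_group[OF th group_FreeGroup group_Gmk]
        M'.Rprod_carrier[OF s(1)] M'.Rprod_carrier[OF s(2)] theta_Rprod[OF k' s(1)] theta_Rprod[OF k' s(2)]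
      by simp
    then show "(theta m k \<circ> M'.mono) (gen n) = a 1 \<otimes>\<^bsub>G\<^esub> theta m k (gen n) \<otimes>\<^bsub>G\<^esub> inv\<^bsub>G\<^esub> (a 1)"
      using conj_basis[OF nk] theta_gen[OF nk] by simp
  qed
  then show ?thesis by simp
qed

end

lemma theta_conj_agen_1_restrict:
  assumes "k \<le> m" and w: "w \<in> carrier (FreeGroup {1..m+k})"
  shows "\<exists>w'\<in>carrier (FreeGroup {1..m+k}).
      theta m k w' = agen m k 1 \<otimes>\<^bsub>Gmk m k\<^esub> theta m k w \<otimes>\<^bsub>Gmk m k\<^esub> inv\<^bsub>Gmk m k\<^esub> (agen m k 1)
    \<and> theta m m w' = agen m m 1 \<otimes>\<^bsub>Gmk m m\<^esub> theta m m w \<otimes>\<^bsub>Gmk m m\<^esub> inv\<^bsub>Gmk m m\<^esub> (agen m m 1)"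
proof
  interpret free_monodromy m k by unfold_locales (rule assms(1))
  show "mono w \<in> carrier (FreeGroup {1..m+k})" using mono_carrier[OF w] .
  have "Gmk_group m k" "Gmk_group m m" using assms(1) by unfold_locales auto
  then show "theta m k (mono w) = agen m k 1 \<otimes>\<^bsub>Gmk m k\<^esub> theta m k w \<otimes>\<^bsub>Gmk m k\<^esub> inv\<^bsub>Gmk m k\<^esub> (agen m k 1)
    \<and> theta m m (mono w) = agen m m 1 \<otimes>\<^bsub>Gmk m m\<^esub> theta m m w \<otimes>\<^bsub>Gmk m m\<^esub> inv\<^bsub>Gmk m m\<^esub> (agen m m 1)"
    using Gmk_group.theta_mono[of m k k w] Gmk_group.theta_mono[of m m k w] assms by simp
qed

theorem proposition5p4:
  fixes m k :: nat
  assumes "1 \<le> m" and "k \<le> m"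
  defines "G \<equiv> Gmk m k" and "a1 \<equiv> agen m k 1"
  shows
    \<comment> \<open>A_1..A_m, B_1..B_k freely generate F: theta is an isomorphism from the free group onto F\<close>
    "theta m k \<in> hom (FreeGroup {1..m+k}) G
     \<and> inj_on (theta m k) (carrier (FreeGroup {1..m+k}))
     \<and> theta m k ` carrier (FreeGroup {1..m+k}) = Fsub m k
     \<comment> \<open>F is the kernel of the homomorphism G \<rightarrow> Z sending every a_i to 1\<close>
     \<and> (\<exists>h \<in> hom G integer_group. \<forall>i \<in> {1..m+k+1}. h (agen m k i) = 1)
     \<and> (\<forall>h \<in> hom G integer_group. (\<forall>i \<in> {1..m+k+1}. h (agen m k i) = 1)
           \<longrightarrow> kernel G integer_group h = Fsub m k)
     \<comment> \<open>G = F \<rtimes> Z with Z = <a_1> (internal semidirect product)\<close>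
     \<and> Fsub m k \<lhd> G
     \<and> (\<forall>n::int. a1 [^]\<^bsub>G\<^esub> n = \<one>\<^bsub>G\<^esub> \<longrightarrow> n = 0)
     \<and> generate G {a1} \<inter> Fsub m k = {\<one>\<^bsub>G\<^esub>}
     \<and> Fsub m k <#>\<^bsub>G\<^esub> generate G {a1} = carrier G
     \<comment> \<open>the monodromy phi(x) = a_1 x a_1^{-1}\<close>
     \<and> (\<forall>i \<in> {1..m}. a1 \<otimes>\<^bsub>G\<^esub> Aelt m k i \<otimes>\<^bsub>G\<^esub> inv\<^bsub>G\<^esub> a1
          = Pprod m k (i - 1) \<otimes>\<^bsub>G\<^esub> Aelt m k i \<otimes>\<^bsub>G\<^esub> inv\<^bsub>G\<^esub> (Pprod m k (i - 1)))
     \<and> (\<forall>j \<in> {1..k}. a1 \<otimes>\<^bsub>G\<^esub> Belt m k j \<otimes>\<^bsub>G\<^esub> inv\<^bsub>G\<^esub> a1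
          = Pprod m k m \<otimes>\<^bsub>G\<^esub> Qprod m k j \<otimes>\<^bsub>G\<^esub> inv\<^bsub>G\<^esub> (Pprod m k (j - 1)))
     \<comment> \<open>phi_{m,k} is the restriction of phi_{m,m} to F_{m+k} (identified via the bases)\<close>
     \<and> (\<forall>w \<in> carrier (FreeGroup {1..m+k}). \<exists>w' \<in> carrier (FreeGroup {1..m+k}).
          theta m k w' = a1 \<otimes>\<^bsub>G\<^esub> theta m k w \<otimes>\<^bsub>G\<^esub> inv\<^bsub>G\<^esub> a1
        \<and> theta m m w' = agen m m 1 \<otimes>\<^bsub>Gmk m m\<^esub> theta m m w \<otimes>\<^bsub>Gmk m m\<^esub> inv\<^bsub>Gmk m m\<^esub> (agen m m 1))"
proof -
  interpret Gmk_group m k by unfold_locales (rule assms(2))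
  show ?thesis unfolding G_def a1_def
    by (intro conjI ballI allI impI theta_hom theta_inj theta_image exists_hom_int kernel_eq_F
        normal_F agen_1_int_pow_eq_one generate_agen_1_Int_F F_mult_generate_agen_1
        monodromy_Aelt monodromy_Belt theta_conj_agen_1_restrict[OF assms(2)]) blast+
qed

end
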